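(* Let $\mathbb{K}$ be a skew field, $n\ge 2$, and let $\theta$ be a non-trivial collineation of $\mathsf{PG}(n,\mathbb{K})$ which is a polar $\{2,2'\}$-kangaroo. Then $\theta$ is a central collineation (an elation or a homology), or $n=2$ and $\theta$ is a Baer collineation.
   Context: Polar positions: for incident point–hyperplane pairs $(p,H),(p',H')$ of $\mathsf{PG}(n,\mathbb{K})$, the position is $2$ or $2'$ if and only if $p\neq p'$, $H\neq H'$, and ($p\in H'$ or $p'\in H$). A collineation $\theta$ is a polar $\{2,2'\}$-kangaroo if no incident pair $(p,H)$ is at position $2$ or $2'$ from $(p^\theta,H^\theta)$. A central collineation is a collineation fixing every point of some hyperplane (equivalently, stabilising every line through some point). A Baer subplane of $\mathsf{PG}(2,\mathbb{K})$ is a subplane such that every line of $\mathsf{PG}(2,\mathbb{K})$ contains at least one of its points and every point lies on at least one of its lines; a Baer collineation is a collineation whose fixed points and lines form a Baer subplane. *)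

theory Defs
  imports Main
begin

text \<open>The underlying left vector space K^(n+1) is modelled as functions nat => K vanishing
  outside {0..n}; scalars act on the left.  A point is a 1-dimensional subspace
  (a set of vectors), a hyperplane is the kernel of a non-zero linear functional
  x |-> sum x_i a_i (which is left-linear).  Incidence is inclusion.\<close>

definition vecs :: "nat \<Rightarrow> (nat \<Rightarrow> 'k::division_ring) set" where
  "vecs n = {v. \<forall>i>n. v i = 0}"

definition pg_points :: "nat \<Rightarrow> (nat \<Rightarrow> 'k::division_ring) set set" where
  "pg_points n = {{(\<lambda>i. c * v i) | c. True} | v. v \<in> vecs n \<and> v \<noteq> (\<lambda>_. 0)}"

definition pg_hyperplanes :: "nat \<Rightarrow> (nat \<Rightarrow> 'k::division_ring) set set" where
  "pg_hyperplanes n = {{x \<in> vecs n. (\<Sum>i\<le>n. x i * a i) = 0} | a. a \<in> vecs n \<and> a \<noteq> (\<lambda>_. 0)}"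

definition vsum :: "(nat \<Rightarrow> 'k::division_ring) set \<Rightarrow> (nat \<Rightarrow> 'k) set \<Rightarrow> (nat \<Rightarrow> 'k) set" where
  "vsum A B = {(\<lambda>i. a i + b i) | a b. a \<in> A \<and> b \<in> B}"

text \<open>r lies on the line spanned by the points p and q (for p = q: r = p).\<close>
definition collinear_pts :: "(nat \<Rightarrow> 'k::division_ring) set \<Rightarrow> _ \<Rightarrow> _ \<Rightarrow> bool" where
  "collinear_pts p q r \<longleftrightarrow> r \<subseteq> vsum p q"

definition collineation :: "nat \<Rightarrow> ((nat \<Rightarrow> 'k::division_ring) set \<Rightarrow> (nat \<Rightarrow> 'k) set) \<Rightarrow> bool" where
  "collineation n \<theta> \<longleftrightarrow> bij_betw \<theta> (pg_points n) (pg_points n) \<and>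
     (\<forall>p\<in>pg_points n. \<forall>q\<in>pg_points n. \<forall>r\<in>pg_points n.
        collinear_pts p q r \<longleftrightarrow> collinear_pts (\<theta> p) (\<theta> q) (\<theta> r))"

text \<open>Image of a hyperplane H under the point map: the union of the images of the points of H
  (a subspace is the union of the 1-dimensional subspaces it contains).\<close>
definition hyp_image :: "nat \<Rightarrow> ((nat \<Rightarrow> 'k::division_ring) set \<Rightarrow> (nat \<Rightarrow> 'k) set) \<Rightarrow> (nat \<Rightarrow> 'k) set \<Rightarrow> (nat \<Rightarrow> 'k) set" where
  "hyp_image n \<theta> H = \<Union> (\<theta> ` {p \<in> pg_points n. p \<subseteq> H})"

definition pos_2_2' :: "'v set \<Rightarrow> 'v set \<Rightarrow> 'v set \<Rightarrow> 'v set \<Rightarrow> bool" where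
  "pos_2_2' p H p' H' \<longleftrightarrow> p \<noteq> p' \<and> H \<noteq> H' \<and> (p \<subseteq> H' \<or> p' \<subseteq> H)"

definition polar_22_kangaroo :: "nat \<Rightarrow> ((nat \<Rightarrow> 'k::division_ring) set \<Rightarrow> (nat \<Rightarrow> 'k) set) \<Rightarrow> bool" where
  "polar_22_kangaroo n \<theta> \<longleftrightarrow>
     (\<forall>p\<in>pg_points n. \<forall>H\<in>pg_hyperplanes n. p \<subseteq> H \<longrightarrow>
        \<not> pos_2_2' p H (\<theta> p) (hyp_image n \<theta> H))"

definition central_collineation :: "nat \<Rightarrow> ((nat \<Rightarrow> 'k::division_ring) set \<Rightarrow> (nat \<Rightarrow> 'k) set) \<Rightarrow> bool" where
  "central_collineation n \<theta> \<longleftrightarrow> collineation n \<theta> \<and>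
     (\<exists>H\<in>pg_hyperplanes n. \<forall>p\<in>pg_points n. p \<subseteq> H \<longrightarrow> \<theta> p = p)"

definition subplane :: "(nat \<Rightarrow> 'k::division_ring) set set \<Rightarrow> (nat \<Rightarrow> 'k) set set \<Rightarrow> bool" where
  "subplane S L \<longleftrightarrow> S \<subseteq> pg_points 2 \<and> L \<subseteq> pg_hyperplanes 2 \<and>
     (\<forall>p\<in>S. \<forall>q\<in>S. p \<noteq> q \<longrightarrow> (\<exists>l\<in>L. p \<subseteq> l \<and> q \<subseteq> l)) \<and>
     (\<forall>l\<in>L. \<forall>m\<in>L. l \<noteq> m \<longrightarrow> (\<exists>p\<in>S. p \<subseteq> l \<and> p \<subseteq> m)) \<and>
     (\<exists>a\<in>S. \<exists>b\<in>S. \<exists>c\<in>S. \<exists>d\<in>S. distinct [a,b,c,d] \<and>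
        (\<forall>x\<in>{a,b,c,d}. \<forall>y\<in>{a,b,c,d}. \<forall>z\<in>{a,b,c,d}.
           distinct [x,y,z] \<longrightarrow> \<not> collinear_pts x y z))"

definition baer_subplane :: "(nat \<Rightarrow> 'k::division_ring) set set \<Rightarrow> (nat \<Rightarrow> 'k) set set \<Rightarrow> bool" where
  "baer_subplane S L \<longleftrightarrow> subplane S L \<and>
     (\<forall>l\<in>pg_hyperplanes 2. \<exists>p\<in>S. p \<subseteq> l) \<and>
     (\<forall>p\<in>pg_points 2. \<exists>l\<in>L. p \<subseteq> l)"

definition baer_collineation :: "((nat \<Rightarrow> 'k::division_ring) set \<Rightarrow> (nat \<Rightarrow> 'k) set) \<Rightarrow> bool" where
  "baer_collineation \<theta> \<longleftrightarrow> collineation 2 \<theta> \<and>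
     baer_subplane {p \<in> pg_points 2. \<theta> p = p} {l \<in> pg_hyperplanes 2. hyp_image 2 \<theta> l = l}"

end

theory Submission
  imports Defs
begin

text \<open>The kangaroo condition says: if \<open>p \<in> H\<close>, \<open>\<theta>\<close> moves \<open>p\<close> and \<open>\<theta>\<close> moves \<open>H\<close>, then
  \<open>p \<notin> \<theta>(H)\<close> and \<open>\<theta>(p) \<notin> H\<close>. Hence for a moved hyperplane \<open>H\<close> all points of \<open>H \<inter> \<theta>(H)\<close> are
  fixed, every hyperplane through a moved point \<open>p\<close> and \<open>\<theta>(p)\<close> is fixed, and so every line
  \<open>p \<theta>(p)\<close> is invariant. Fix a moved hyperplane \<open>K\<close>. For the points \<open>q\<close> of \<open>K \<setminus> \<theta>(K)\<close> the lines
  \<open>q \<theta>(q)\<close> meet pairwise, in fixed points off \<open>K\<close>. If they are concurrent, their common point is a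
  centre, and a centre yields an axis in the pencil of hyperplanes through \<open>K \<inter> \<theta>(K)\<close>: \<open>\<theta>\<close> is
  central. Otherwise three of the meet points span a triangle whose sides cut \<open>K\<close> in three collinear
  points of \<open>K \<setminus> \<theta>(K)\<close>. For \<open>n \<ge> 3\<close> this is impossible, as \<open>K\<close> is not a line; for \<open>n = 2\<close> the
  triangle and a point of \<open>K \<inter> \<theta>(K)\<close> form a fixed quadrangle, so the fixed points and lines form a
  subplane, which the kangaroo property makes a Baer subplane.\<close>

section \<open>Coordinates\<close>

abbreviation dot :: "nat \<Rightarrow> (nat \<Rightarrow> 'k::division_ring) \<Rightarrow> (nat \<Rightarrow> 'k) \<Rightarrow> 'k" where
  "dot n x a \<equiv> \<Sum>i\<le>n. x i * a i"

abbreviation hyperplane_of :: "nat \<Rightarrow> (nat \<Rightarrow> 'k::division_ring) \<Rightarrow> (nat \<Rightarrow> 'k) set" where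
  "hyperplane_of n a \<equiv> {x \<in> vecs n. dot n x a = 0}"

definition point_of :: "(nat \<Rightarrow> 'k::division_ring) \<Rightarrow> (nat \<Rightarrow> 'k) set" where
  "point_of v = {(\<lambda>i. c * v i) | c. True}"

abbreviation unit_vec :: "nat \<Rightarrow> nat \<Rightarrow> 'k::division_ring" where
  "unit_vec k \<equiv> (\<lambda>j. if j = k then 1 else 0)"

lemma dot_lincomb: "dot n (\<lambda>i. a * x i + b * y i) h = a * dot n x h + b * dot n y h"
  by (simp add: distrib_right sum.distrib sum_distrib_left mult.assoc)

lemma dot_scale: "dot n (\<lambda>i. a * x i) h = a * dot n x h"
  by (simp add: sum_distrib_left mult.assoc)

lemma dot_lincomb_right: "dot n x (\<lambda>i. h i * a + g i * b) = dot n x h * a + dot n x g * b"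
  by (simp add: distrib_left sum.distrib sum_distrib_right mult.assoc)

lemma dot_unit_vec:
  assumes "k \<le> n"
  shows "dot n (unit_vec k) f = f k"
proof -
  have "dot n (unit_vec k) f = (\<Sum>i\<le>n. if i = k then f k else 0)" by (intro sum.cong) auto
  then show ?thesis using assms by simp
qed

lemma dot_unit_vec_right:
  assumes "k \<le> n"
  shows "dot n x (unit_vec k) = x k"
proof -
  have "dot n x (unit_vec k) = (\<Sum>i\<le>n. if i = k then x k else 0)" by (intro sum.cong) auto
  then show ?thesis using assms by simp
qed

lemma vecs_lincomb: "x \<in> vecs n \<Longrightarrow> y \<in> vecs n \<Longrightarrow> (\<lambda>i. a * x i + b * y i) \<in> vecs n"
  by (simp add: vecs_def)

lemma vecs_scale: "x \<in> vecs n \<Longrightarrow> (\<lambda>i. a * x i) \<in> vecs n"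
  by (simp add: vecs_def)

lemma vecs_lincomb_right: "x \<in> vecs n \<Longrightarrow> y \<in> vecs n \<Longrightarrow> (\<lambda>i. x i * a + y i * b) \<in> vecs n"
  by (simp add: vecs_def)

lemma unit_vec_vecs: "k \<le> n \<Longrightarrow> unit_vec k \<in> vecs n"
  by (simp add: vecs_def)

lemma unit_vec_nonzero: "unit_vec k \<noteq> (\<lambda>_. 0 :: 'k::division_ring)"
  by (metis one_neq_zero)

lemma vecs_nonzero_coordinate:
  assumes "f \<in> vecs n" "f \<noteq> (\<lambda>_. 0)"
  obtains i where "i \<le> n" "f i \<noteq> 0"
  using assms by (auto simp: vecs_def) (meson not_le)

lemma dot_eq_zero_imp_zero:
  assumes "f \<in> vecs n" "\<And>x. x \<in> vecs n \<Longrightarrow> dot n x f = 0"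
  shows "f = (\<lambda>_. 0)"
proof (rule ccontr)
  assume "f \<noteq> (\<lambda>_. 0)"
  then obtain i where "i \<le> n" "f i \<noteq> 0" using vecs_nonzero_coordinate assms(1) by blast
  then show False using assms(2)[OF unit_vec_vecs] dot_unit_vec by metis
qed

lemma scale_eq_zero_iff:
  fixes v :: "nat \<Rightarrow> 'k::division_ring"
  assumes "v \<noteq> (\<lambda>_. 0)"
  shows "(\<lambda>i. c * v i) = (\<lambda>_. 0) \<longleftrightarrow> c = 0"
  using assms by (auto simp: fun_eq_iff)

lemma pg_points_iff: "p \<in> pg_points n \<longleftrightarrow> (\<exists>v. v \<in> vecs n \<and> v \<noteq> (\<lambda>_. 0) \<and> p = point_of v)"
  by (auto simp: pg_points_def point_of_def)

lemma pg_hyperplanes_iff: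
  "H \<in> pg_hyperplanes n \<longleftrightarrow> (\<exists>a. a \<in> vecs n \<and> a \<noteq> (\<lambda>_. 0) \<and> H = hyperplane_of n a)"
  by (auto simp: pg_hyperplanes_def)

lemma pg_pointE:
  assumes "p \<in> pg_points n"
  obtains v where "v \<in> vecs n" "v \<noteq> (\<lambda>_. 0)" "p = point_of v"
  using assms pg_points_iff by blast

lemma pg_hyperplaneE:
  assumes "H \<in> pg_hyperplanes n"
  obtains a where "a \<in> vecs n" "a \<noteq> (\<lambda>_. 0)" "H = hyperplane_of n a"
  using assms pg_hyperplanes_iff by blast

lemma point_of_in_pg_points: "v \<in> vecs n \<Longrightarrow> v \<noteq> (\<lambda>_. 0) \<Longrightarrow> point_of v \<in> pg_points n"
  using pg_points_iff by blast

lemma hyperplane_of_in_pg_hyperplanes: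
  "a \<in> vecs n \<Longrightarrow> a \<noteq> (\<lambda>_. 0) \<Longrightarrow> hyperplane_of n a \<in> pg_hyperplanes n"
  using pg_hyperplanes_iff by blast

lemma mem_point_of: "x \<in> point_of v \<longleftrightarrow> (\<exists>c. x = (\<lambda>i. c * v i))"
  by (auto simp: point_of_def)

lemma in_point_of_self: "v \<in> point_of v"
  unfolding mem_point_of by (metis mult_1)

lemma zero_in_point_of: "(\<lambda>_. 0) \<in> point_of v"
  unfolding mem_point_of by (metis mult_zero_left)

lemma point_of_zero: "point_of (\<lambda>_. 0) = {(\<lambda>_. 0) :: nat \<Rightarrow> 'k::division_ring}"
  by (auto simp: mem_point_of)

lemma point_of_eqI:
  assumes "w \<in> point_of v" "w \<noteq> (\<lambda>_. 0)"
  shows "point_of w = point_of v"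
proof -
  obtain c where c: "w = (\<lambda>i. c * v i)" using assms(1) mem_point_of by blast
  with assms(2) have "c \<noteq> 0" by auto
  have "(\<lambda>i. d * w i) = (\<lambda>i. (d * c) * v i)" for d
    by (simp add: c mult.assoc)
  moreover have "(\<lambda>i. d * v i) = (\<lambda>i. (d * inverse c) * w i)" for d
  proof -
    have "(d * inverse c) * (c * v i) = d * v i" for i
      using \<open>c \<noteq> 0\<close> by (simp add: mult.assoc[symmetric]) (simp add: mult.assoc)
    then show ?thesis by (simp add: c)
  qed
  ultimately show ?thesis
    unfolding point_of_def by blast
qed

lemma pg_point_rep_nonzero:
  assumes "p \<in> pg_points n" "p = point_of a"
  shows "a \<noteq> (\<lambda>_. 0)"
proof
  assume "a = (\<lambda>_. 0)"
  moreover obtain v where "v \<noteq> (\<lambda>_. 0)" "p = point_of v" using assms(1) by (rule pg_pointE)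
  ultimately have "v \<in> {\<lambda>_. 0}" using assms(2) in_point_of_self[of v] by (simp add: point_of_zero)
  then show False using \<open>v \<noteq> (\<lambda>_. 0)\<close> by simp
qed

lemma pg_points_subset_vecs: "p \<in> pg_points n \<Longrightarrow> p \<subseteq> vecs n"
  by (auto elim!: pg_pointE simp: mem_point_of vecs_def)

lemma point_of_subset_hyperplane_of_iff:
  assumes "v \<in> vecs n"
  shows "point_of v \<subseteq> hyperplane_of n a \<longleftrightarrow> dot n v a = 0"
proof
  assume "point_of v \<subseteq> hyperplane_of n a"
  then show "dot n v a = 0" using in_point_of_self by blast
next
  assume "dot n v a = 0"
  then show "point_of v \<subseteq> hyperplane_of n a"
    using assms by (auto simp: dot_scale vecs_scale mem_point_of)
qed

lemma pg_point_subset_hyperplane_iff: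
  assumes "H \<in> pg_hyperplanes n" "x \<in> vecs n" "x \<noteq> (\<lambda>_. 0)"
  shows "point_of x \<subseteq> H \<longleftrightarrow> x \<in> H"
  using assms(1) by (rule pg_hyperplaneE) (use assms(2) point_of_subset_hyperplane_of_iff in auto)

lemma zero_in_pg_hyperplane: "H \<in> pg_hyperplanes n \<Longrightarrow> (\<lambda>_. 0) \<in> H"
  by (auto elim!: pg_hyperplaneE simp: vecs_def)

lemma pg_hyperplanes_subset_vecs: "H \<in> pg_hyperplanes n \<Longrightarrow> H \<subseteq> vecs n"
  by (auto elim!: pg_hyperplaneE)

lemma collinear_point_of_iff:
  "collinear_pts (point_of a) (point_of b) (point_of r) \<longleftrightarrow> (\<exists>\<alpha> \<beta>. r = (\<lambda>i. \<alpha> * a i + \<beta> * b i))"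
proof
  assume "collinear_pts (point_of a) (point_of b) (point_of r)"
  then have "r \<in> vsum (point_of a) (point_of b)"
    unfolding collinear_pts_def using in_point_of_self by blast
  then show "\<exists>\<alpha> \<beta>. r = (\<lambda>i. \<alpha> * a i + \<beta> * b i)"
    by (auto simp: vsum_def mem_point_of)
next
  assume "\<exists>\<alpha> \<beta>. r = (\<lambda>i. \<alpha> * a i + \<beta> * b i)"
  then obtain \<alpha> \<beta> where r: "r = (\<lambda>i. \<alpha> * a i + \<beta> * b i)" by blast
  show "collinear_pts (point_of a) (point_of b) (point_of r)"
    unfolding collinear_pts_def
  proof
    fix x assume "x \<in> point_of r"
    then obtain c where "x = (\<lambda>i. (\<lambda>i. (c * \<alpha>) * a i) i + (\<lambda>i. (c * \<beta>) * b i) i)"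
      by (auto simp: mem_point_of r distrib_left mult.assoc)
    moreover have "(\<lambda>i. (c * \<alpha>) * a i) \<in> point_of a" "(\<lambda>i. (c * \<beta>) * b i) \<in> point_of b"
      by (auto simp: mem_point_of)
    ultimately show "x \<in> vsum (point_of a) (point_of b)"
      unfolding vsum_def by force
  qed
qed

lemma collinear_point_ofI:
  "r = (\<lambda>i. \<alpha> * a i + \<beta> * b i) \<Longrightarrow> collinear_pts (point_of a) (point_of b) (point_of r)"
  unfolding collinear_point_of_iff by blast

lemma collinear_point_ofE:
  assumes "collinear_pts (point_of a) (point_of b) (point_of r)"
  obtains \<alpha> \<beta> where "r = (\<lambda>i. \<alpha> * a i + \<beta> * b i)"
  using assms unfolding collinear_point_of_iff by blast

section \<open>Linear algebra over a skew field\<close>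

lemma homogeneous_system_nontrivial_solution:
  fixes h :: "nat \<Rightarrow> nat \<Rightarrow> 'k::division_ring"
  assumes "finite I" "card I > m"
  shows "\<exists>x. (\<forall>i. i \<notin> I \<longrightarrow> x i = 0) \<and> (\<exists>i\<in>I. x i \<noteq> 0) \<and> (\<forall>j<m. (\<Sum>i\<in>I. x i * h j i) = 0)"
  using assms
proof (induction m arbitrary: I h)
  case 0
  then obtain i0 where "i0 \<in> I" by (metis card.empty ex_in_conv less_irrefl)
  then show ?case by (intro exI[of _ "\<lambda>i. if i = i0 then 1 else 0"]) auto
next
  case (Suc m)
  show ?case
  proof (cases "\<forall>i\<in>I. h m i = 0")
    case True
    from Suc.IH[of I h] Suc.prems obtain x where x: "\<forall>i. i \<notin> I \<longrightarrow> x i = 0" "\<exists>i\<in>I. x i \<noteq> 0"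
      "\<forall>j<m. (\<Sum>i\<in>I. x i * h j i) = 0" by auto
    have "(\<Sum>i\<in>I. x i * h m i) = 0" using True by simp
    then show ?thesis using x less_Suc_eq by auto
  next
    case False
    then obtain i0 where i0: "i0 \<in> I" "h m i0 \<noteq> 0" by auto
    \<comment> \<open>Gaussian elimination: solve equation \<open>m\<close> for the unknown \<open>i0\<close> and substitute.\<close>
    define I' where "I' = I - {i0}"
    define h' where "h' = (\<lambda>j i. h j i - h m i * inverse (h m i0) * h j i0)"
    have "finite I'" "card I' > m" using Suc.prems i0 by (simp_all add: I'_def card_Diff_singleton)
    from Suc.IH[OF this, of h'] obtain x' where x': "\<forall>i. i \<notin> I' \<longrightarrow> x' i = 0" "\<exists>i\<in>I'. x' i \<noteq> 0"
      "\<forall>j<m. (\<Sum>i\<in>I'. x' i * h' j i) = 0" by auto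
    define s where "s = (\<Sum>i\<in>I'. x' i * h m i)"
    define x where "x = x'(i0 := - s * inverse (h m i0))"
    have i0I': "i0 \<notin> I'" using I'_def by auto
    have sum_x: "(\<Sum>i\<in>I. x i * g i) = (\<Sum>i\<in>I'. x' i * g i) + x i0 * g i0" for g
    proof -
      have "(\<Sum>i\<in>I. x i * g i) = x i0 * g i0 + (\<Sum>i\<in>I'. x i * g i)"
        using sum.remove[OF _ i0(1)] Suc.prems(1) I'_def by blast
      also have "(\<Sum>i\<in>I'. x i * g i) = (\<Sum>i\<in>I'. x' i * g i)"
        using i0I' x_def by (intro sum.cong) auto
      finally show ?thesis by (simp add: add.commute)
    qed
    have "(\<Sum>i\<in>I. x i * h j i) = 0" if "j < Suc m" for j
    proof (cases "j = m")
      case True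
      have "x i0 * h m i0 = - s" using i0(2) x_def by (simp add: mult.assoc)
      then show ?thesis using sum_x[of "h m"] True s_def by simp
    next
      case False
      with that have "j < m" by simp
      have "(\<Sum>i\<in>I'. x' i * h' j i)
          = (\<Sum>i\<in>I'. x' i * h j i) - (\<Sum>i\<in>I'. x' i * h m i) * (inverse (h m i0) * h j i0)"
        by (simp add: h'_def right_diff_distrib sum_subtractf sum_distrib_right mult.assoc)
      moreover have "x i0 * h j i0 = - s * (inverse (h m i0) * h j i0)"
        using x_def by (simp add: mult.assoc)
      ultimately show ?thesis using sum_x[of "h j"] x'(3) \<open>j < m\<close> s_def by simp
    qed
    moreover have "\<forall>i. i \<notin> I \<longrightarrow> x i = 0" using x'(1) x_def I'_def i0 by auto
    moreover have "\<exists>i\<in>I. x i \<noteq> 0" using x'(2) x_def I'_def i0I' by (metis DiffD1 fun_upd_other)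
    ultimately show ?thesis by blast
  qed
qed

lemma dependent_if_card_gt_dim:
  fixes w :: "nat \<Rightarrow> nat \<Rightarrow> 'k::division_ring"
  assumes "finite I" "card I > n + 1" "\<forall>i\<in>I. w i \<in> vecs n"
  shows "\<exists>l. (\<exists>i\<in>I. l i \<noteq> 0) \<and> (\<forall>j. (\<Sum>i\<in>I. l i * w i j) = 0)"
proof -
  obtain x where x: "\<exists>i\<in>I. x i \<noteq> 0" "\<forall>j<n+1. (\<Sum>i\<in>I. x i * w i j) = 0"
    using homogeneous_system_nontrivial_solution[OF assms(1,2), of "\<lambda>j i. w i j"] by blast
  have "(\<Sum>i\<in>I. x i * w i j) = 0" for j
  proof (cases "j < n + 1")
    case False
    then have "\<forall>i\<in>I. w i j = 0" using assms(3) by (simp add: vecs_def)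
    then show ?thesis by simp
  qed (use x in simp)
  then show ?thesis using x by blast
qed

fun span_list :: "(nat \<Rightarrow> 'k::division_ring) list \<Rightarrow> (nat \<Rightarrow> 'k) set" where
  "span_list [] = {\<lambda>_. 0}"
| "span_list (w # vs) = {(\<lambda>i. c * w i + y i) | c y. y \<in> span_list vs}"

lemma span_list_pair_iff: "x \<in> span_list [a, b] \<longleftrightarrow> (\<exists>\<alpha> \<beta>. x = (\<lambda>i. \<alpha> * a i + \<beta> * b i))"
proof
  assume "\<exists>\<alpha> \<beta>. x = (\<lambda>i. \<alpha> * a i + \<beta> * b i)"
  then obtain \<alpha> \<beta> where "x = (\<lambda>i. \<alpha> * a i + \<beta> * b i)" by blast
  then show "x \<in> span_list [a, b]"
    by (simp, intro exI[of _ \<alpha>] exI[of _ "\<lambda>i. \<beta> * b i"]) auto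
qed auto

lemma span_list_common_kernel:
  fixes vs :: "(nat \<Rightarrow> 'k::division_ring) list"
  assumes "set vs \<subseteq> vecs n"
  shows "\<exists>F :: nat \<Rightarrow> nat \<Rightarrow> 'k. (\<forall>v\<in>set vs. \<forall>k. dot n v (F k) = 0) \<and>
             (\<forall>x\<in>vecs n. (\<forall>k. dot n x (F k) = 0) \<longrightarrow> x \<in> span_list vs)"
  using assms
proof (induction vs)
  case Nil
  define F :: "nat \<Rightarrow> nat \<Rightarrow> 'k" where "F = (\<lambda>k. unit_vec k)"
  have "x \<in> span_list []" if x: "x \<in> vecs n" "\<forall>k. dot n x (F k) = 0" for x
  proof -
    have "x k = 0" for k
      using x dot_unit_vec_right[of k n x] by (cases "k \<le> n") (auto simp: vecs_def F_def)
    then show ?thesis by auto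
  qed
  then show ?case by (intro exI[of _ F]) auto
next
  case (Cons w vs)
  then obtain F :: "nat \<Rightarrow> nat \<Rightarrow> 'k" where F: "\<forall>v\<in>set vs. \<forall>k. dot n v (F k) = 0"
     "\<forall>x\<in>vecs n. (\<forall>k. dot n x (F k) = 0) \<longrightarrow> x \<in> span_list vs" by auto
  have w: "w \<in> vecs n" using Cons.prems by auto
  show ?case
  proof (cases "\<forall>k. dot n w (F k) = 0")
    case True
    have "x \<in> span_list (w # vs)" if "x \<in> span_list vs" for x
      using that by (simp, intro exI[of _ 0] exI[of _ x]) simp
    then show ?thesis using F True by (intro exI[of _ F]) auto
  next
    case False
    then obtain k0 where k0: "dot n w (F k0) \<noteq> 0" by auto
    define d where "d = dot n w (F k0)"
    \<comment> \<open>Modify the forms so that they also vanish on \<open>w\<close>.\<close>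
    define F' where "F' = (\<lambda>k i. F k i - F k0 i * (inverse d * dot n w (F k)))"
    have F': "dot n x (F' k) = dot n x (F k) - dot n x (F k0) * (inverse d * dot n w (F k))" for x k
      by (simp add: F'_def right_diff_distrib sum_subtractf sum_distrib_right mult.assoc)
    have "dot n v (F' k) = 0" if "v \<in> set (w # vs)" for v k
    proof -
      have "dot n w (F k0) * (inverse d * dot n w (F k)) = dot n w (F k)"
        using k0 d_def by (simp add: mult.assoc[symmetric])
      then show ?thesis using that F' F(1) by auto
    qed
    moreover have "x \<in> span_list (w # vs)" if x: "x \<in> vecs n" "\<forall>k. dot n x (F' k) = 0" for x
    proof -
      define e where "e = dot n x (F k0) * inverse d"
      define y where "y = (\<lambda>i. 1 * x i + (- e) * w i)"
      have "dot n x (F k) = e * dot n w (F k)" for k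
        using x(2) F'[of x k] e_def by (simp add: mult.assoc)
      then have "\<forall>k. dot n y (F k) = 0" unfolding y_def dot_lincomb by simp
      moreover have "y \<in> vecs n" using x(1) w unfolding y_def by (rule vecs_lincomb)
      ultimately have "y \<in> span_list vs" using F(2) by blast
      moreover have "x = (\<lambda>i. e * w i + y i)" unfolding y_def by auto
      ultimately show ?thesis by (simp, intro exI[of _ e] exI[of _ y]) simp
    qed
    ultimately show ?thesis by blast
  qed
qed

lemma separating_form:
  fixes vs :: "(nat \<Rightarrow> 'k::division_ring) list"
  assumes "set vs \<subseteq> vecs n" "x \<in> vecs n" "x \<notin> span_list vs"
  shows "\<exists>h. h \<in> vecs n \<and> h \<noteq> (\<lambda>_. 0) \<and> (\<forall>v\<in>set vs. dot n v h = 0) \<and> dot n x h \<noteq> 0"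
proof -
  obtain F :: "nat \<Rightarrow> nat \<Rightarrow> 'k" where F: "\<forall>v\<in>set vs. \<forall>k. dot n v (F k) = 0"
     "\<forall>x\<in>vecs n. (\<forall>k. dot n x (F k) = 0) \<longrightarrow> x \<in> span_list vs"
    using span_list_common_kernel[OF assms(1)] by blast
  then obtain k where k: "dot n x (F k) \<noteq> 0" using assms by blast
  define h where "h = (\<lambda>i. if i \<le> n then F k i else 0)"
  have dot_h: "dot n v h = dot n v (F k)" for v by (simp add: h_def)
  have "h \<in> vecs n" by (simp add: h_def vecs_def)
  moreover have "h \<noteq> (\<lambda>_. 0)" using k dot_h[of x] by auto
  ultimately show ?thesis using dot_h F(1) k by auto
qed

lemma lincomb_eq_zero_imp_trivial:
  fixes a b :: "nat \<Rightarrow> 'k::division_ring"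
  assumes "a \<noteq> (\<lambda>_. 0)" "b \<noteq> (\<lambda>_. 0)" "point_of a \<noteq> point_of b"
    and "(\<lambda>i. \<alpha> * a i + \<beta> * b i) = (\<lambda>_. 0)"
  shows "\<alpha> = 0 \<and> \<beta> = 0"
proof -
  have "\<alpha> = 0"
  proof (rule ccontr)
    assume "\<alpha> \<noteq> 0"
    have "a i = (- (inverse \<alpha> * \<beta>)) * b i" for i
    proof -
      have "\<alpha> * a i = - (\<beta> * b i)" using fun_cong[OF assms(4), of i] by (simp add: eq_neg_iff_add_eq_0)
      then have "inverse \<alpha> * (\<alpha> * a i) = inverse \<alpha> * (- (\<beta> * b i))" by simp
      then show ?thesis using \<open>\<alpha> \<noteq> 0\<close> by (simp add: mult.assoc[symmetric])
    qed
    then have "a \<in> point_of b" unfolding mem_point_of by blast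
    then show False using point_of_eqI assms(1,3) by blast
  qed
  moreover have "(\<lambda>i. \<beta> * b i) = (\<lambda>_. 0)" using assms(4) \<open>\<alpha> = 0\<close> by simp
  then have "\<beta> = 0" using scale_eq_zero_iff assms(2) by blast
  ultimately show ?thesis by simp
qed

lemma pg_points_independent:
  assumes "p \<in> pg_points n" "q \<in> pg_points n" "p \<noteq> q" "p = point_of a" "q = point_of b"
    and "(\<lambda>i. \<alpha> * a i + \<beta> * b i) = (\<lambda>_. 0)"
  shows "\<alpha> = 0 \<and> \<beta> = 0"
  using lincomb_eq_zero_imp_trivial[OF pg_point_rep_nonzero[OF assms(1,4)] pg_point_rep_nonzero[OF assms(2,5)]]
    assms(3-6) by blast

lemma span_pair_dependent:
  fixes x y z a b :: "nat \<Rightarrow> 'k::division_ring"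
  assumes "x \<in> span_list [a, b]" "y \<in> span_list [a, b]" "z \<in> span_list [a, b]"
  shows "\<exists>l1 l2 l3. (l1 \<noteq> 0 \<or> l2 \<noteq> 0 \<or> l3 \<noteq> 0) \<and> (\<lambda>i. l1 * x i + l2 * y i + l3 * z i) = (\<lambda>_. 0)"
proof -
  obtain a1 b1 where 1: "x = (\<lambda>i. a1 * a i + b1 * b i)" using assms(1) span_list_pair_iff by blast
  obtain a2 b2 where 2: "y = (\<lambda>i. a2 * a i + b2 * b i)" using assms(2) span_list_pair_iff by blast
  obtain a3 b3 where 3: "z = (\<lambda>i. a3 * a i + b3 * b i)" using assms(3) span_list_pair_iff by blast
  \<comment> \<open>Two equations in the three unknown coefficients.\<close>
  define h where "h = (\<lambda>(j::nat) (k::nat). if j = 0 then (if k = 0 then a1 else if k = 1 then a2 else a3)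
                                 else (if k = 0 then b1 else if k = 1 then b2 else b3))"
  obtain l where l: "\<exists>i\<in>{0,1,2}. l i \<noteq> 0" "\<forall>j<2. (\<Sum>i\<in>{0,1,2}. l i * h j i) = 0"
    using homogeneous_system_nontrivial_solution[of "{0,1,2::nat}" 2 h] by auto
  have "l 0 * a1 + l 1 * a2 + l 2 * a3 = 0" "l 0 * b1 + l 1 * b2 + l 2 * b3 = 0"
    using l(2)[rule_format, of 0] l(2)[rule_format, of 1] by (simp_all add: h_def add.assoc)
  moreover have "l 0 * x i + l 1 * y i + l 2 * z i
      = (l 0 * a1 + l 1 * a2 + l 2 * a3) * a i + (l 0 * b1 + l 1 * b2 + l 2 * b3) * b i" for i
    unfolding 1 2 3 by (simp add: algebra_simps)
  ultimately have "(\<lambda>i. l 0 * x i + l 1 * y i + l 2 * z i) = (\<lambda>_. 0)" by simp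
  moreover have "l 0 \<noteq> 0 \<or> l 1 \<noteq> 0 \<or> l 2 \<noteq> 0" using l(1) by auto
  ultimately show ?thesis by blast
qed

lemma span_pair_exchange:
  fixes a b x y r :: "nat \<Rightarrow> 'k::division_ring"
  assumes "x \<in> span_list [a, b]" "y \<in> span_list [a, b]" "r \<in> span_list [a, b]"
    and "x \<noteq> (\<lambda>_. 0)" "y \<noteq> (\<lambda>_. 0)" "point_of x \<noteq> point_of y"
  shows "r \<in> span_list [x, y]"
proof -
  obtain l1 l2 l3 where l: "l1 \<noteq> 0 \<or> l2 \<noteq> 0 \<or> l3 \<noteq> 0"
      "(\<lambda>i. l1 * x i + l2 * y i + l3 * r i) = (\<lambda>_. 0)"
    using span_pair_dependent[OF assms(1-3)] by blast
  have e: "l1 * x i + l2 * y i + l3 * r i = 0" for i using fun_cong[OF l(2)] by simp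
  have "l3 \<noteq> 0"
  proof
    assume "l3 = 0"
    then have "(\<lambda>i. l1 * x i + l2 * y i) = (\<lambda>_. 0)" using e by auto
    then show False using lincomb_eq_zero_imp_trivial[OF assms(4-6)] l(1) \<open>l3 = 0\<close> by blast
  qed
  have "r i = (- (inverse l3 * l1)) * x i + (- (inverse l3 * l2)) * y i" for i
  proof -
    have "l3 * r i = - (l1 * x i + l2 * y i)"
      using e[of i] by (simp add: add_eq_0_iff2 add.commute eq_neg_iff_add_eq_0)
    then have "r i = inverse l3 * (- (l1 * x i + l2 * y i))"
      using \<open>l3 \<noteq> 0\<close> by (metis mult.assoc left_inverse mult_1)
    then show ?thesis by (simp add: algebra_simps)
  qed
  then show ?thesis using span_list_pair_iff by blast
qed

lemma hyperplane_of_subset_imp_proportional: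
  assumes "f \<in> vecs n" "f \<noteq> (\<lambda>_. 0)" "hyperplane_of n f \<subseteq> hyperplane_of n g"
  shows "\<exists>c. \<forall>x\<in>vecs n. dot n x g = dot n x f * c"
proof -
  obtain i where i: "i \<le> n" "f i \<noteq> 0" using vecs_nonzero_coordinate assms(1,2) by blast
  have "dot n x g = dot n x f * (inverse (f i) * g i)" if x: "x \<in> vecs n" for x
  proof -
    define y where "y = (\<lambda>j. 1 * x j + (- (dot n x f * inverse (f i))) * unit_vec i j)"
    have "y \<in> vecs n" unfolding y_def using x unit_vec_vecs[OF i(1)] by (rule vecs_lincomb)
    moreover have "dot n y f = 0" unfolding y_def dot_lincomb dot_unit_vec[OF i(1)] using i(2)
      by (simp add: mult.assoc)
    ultimately have "dot n y g = 0" using assms(3) by blast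
    then show ?thesis unfolding y_def dot_lincomb dot_unit_vec[OF i(1)] by (simp add: mult.assoc)
  qed
  then show ?thesis by blast
qed

lemma hyperplane_of_subset_imp_eq:
  assumes "f \<in> vecs n" "f \<noteq> (\<lambda>_. 0)" "g \<in> vecs n" "g \<noteq> (\<lambda>_. 0)"
    and "hyperplane_of n f \<subseteq> hyperplane_of n g"
  shows "hyperplane_of n f = hyperplane_of n g"
proof -
  obtain c where c: "\<forall>x\<in>vecs n. dot n x g = dot n x f * c"
    using hyperplane_of_subset_imp_proportional assms(1,2,5) by blast
  have "c \<noteq> 0"
  proof
    assume "c = 0"
    then have "g = (\<lambda>_. 0)" using dot_eq_zero_imp_zero[OF assms(3)] c by simp
    then show False using assms(4) by simp
  qed
  then have "hyperplane_of n g \<subseteq> hyperplane_of n f" using c by auto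
  then show ?thesis using assms(5) by blast
qed

lemma dual_vectors_exist:
  assumes "f \<in> vecs n" "f \<noteq> (\<lambda>_. 0)" "g \<in> vecs n" "g \<noteq> (\<lambda>_. 0)"
    and "hyperplane_of n f \<noteq> hyperplane_of n g"
  obtains u v where "u \<in> vecs n" "v \<in> vecs n" "dot n u f = 1" "dot n u g = 0" "dot n v f = 0" "dot n v g = 1"
proof -
  have "\<not> hyperplane_of n g \<subseteq> hyperplane_of n f"
    using hyperplane_of_subset_imp_eq[OF assms(3,4,1,2)] assms(5) by auto
  then obtain u0 where u0: "u0 \<in> vecs n" "dot n u0 g = 0" "dot n u0 f \<noteq> 0" by auto
  have "\<not> hyperplane_of n f \<subseteq> hyperplane_of n g"
    using hyperplane_of_subset_imp_eq[OF assms(1-4)] assms(5) by auto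
  then obtain v0 where v0: "v0 \<in> vecs n" "dot n v0 f = 0" "dot n v0 g \<noteq> 0" by auto
  define u where "u = (\<lambda>i. inverse (dot n u0 f) * u0 i)"
  define v where "v = (\<lambda>i. inverse (dot n v0 g) * v0 i)"
  have "u \<in> vecs n" "v \<in> vecs n" unfolding u_def v_def using u0(1) v0(1) by (simp_all only: vecs_scale)
  moreover have "dot n u f = 1" "dot n u g = 0" "dot n v f = 0" "dot n v g = 1"
    unfolding u_def v_def dot_scale using u0 v0 by simp_all
  ultimately show ?thesis by (rule that)
qed

lemma form_decompose:
  assumes "u \<in> vecs n" "v \<in> vecs n" "dot n u f = 1" "dot n u g = 0" "dot n v f = 0" "dot n v g = 1"
    and "hyperplane_of n f \<inter> hyperplane_of n g \<subseteq> hyperplane_of n b" "x \<in> vecs n"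
  shows "dot n x b = dot n x f * dot n u b + dot n x g * dot n v b"
proof -
  define y where "y = (\<lambda>j. x j - dot n x f * u j - dot n x g * v j)"
  have dot_y: "dot n y h = dot n x h - dot n x f * dot n u h - dot n x g * dot n v h" for h
    unfolding y_def by (simp add: left_diff_distrib sum_subtractf sum_distrib_left mult.assoc)
  have "y \<in> vecs n" using assms by (simp add: y_def vecs_def)
  moreover have "dot n y f = 0" "dot n y g = 0" using assms(3-6) by (simp_all only: dot_y) simp_all
  ultimately have "y \<in> hyperplane_of n b" using assms(7) by auto
  then have "dot n x b - dot n x f * dot n u b - dot n x g * dot n v b = 0" by (simp only: dot_y[symmetric]) simp
  then show ?thesis by (simp only: diff_diff_eq right_minus_eq)
qed

definition is_subspace :: "(nat \<Rightarrow> 'k::division_ring) set \<Rightarrow> bool" where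
  "is_subspace W \<longleftrightarrow> (\<lambda>_. 0) \<in> W \<and> (\<forall>x\<in>W. \<forall>y\<in>W. \<forall>a b. (\<lambda>i. a * x i + b * y i) \<in> W)"

lemma is_subspace_lincomb: "is_subspace W \<Longrightarrow> x \<in> W \<Longrightarrow> y \<in> W \<Longrightarrow> (\<lambda>i. a * x i + b * y i) \<in> W"
  unfolding is_subspace_def by blast

lemma is_subspace_scale: "is_subspace W \<Longrightarrow> x \<in> W \<Longrightarrow> (\<lambda>i. a * x i) \<in> W"
  using is_subspace_lincomb[of W x x a 0] by simp

lemma is_subspace_sum:
  assumes "is_subspace W" "finite F" "\<forall>i\<in>F. w i \<in> W"
  shows "(\<lambda>j. \<Sum>i\<in>F. c i * w i j) \<in> W"
  using assms(2,3)
proof (induction F rule: finite_induct)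
  case empty
  then show ?case using assms(1) by (simp add: is_subspace_def)
next
  case (insert a F)
  then have "w a \<in> W" "(\<lambda>j. \<Sum>i\<in>F. c i * w i j) \<in> W" by simp_all
  from is_subspace_lincomb[OF assms(1) this, of "c a" 1]
  show ?case using insert(1,2) by simp
qed

lemma is_subspace_complement_coeff_unique:
  assumes "is_subspace W" "x0 \<notin> W" "(\<lambda>j. v j - a * x0 j) \<in> W" "(\<lambda>j. v j - b * x0 j) \<in> W"
  shows "a = b"
proof (rule ccontr)
  assume "a \<noteq> b"
  have "(\<lambda>i. 1 * (v i - a * x0 i) + (- 1) * (v i - b * x0 i)) \<in> W"
    using is_subspace_lincomb[OF assms(1,3,4)] .
  moreover have "(\<lambda>i. 1 * (v i - a * x0 i) + (- 1) * (v i - b * x0 i)) = (\<lambda>i. (b - a) * x0 i)"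
    by (simp add: algebra_simps)
  ultimately have "(\<lambda>i. inverse (b - a) * ((b - a) * x0 i)) \<in> W"
    using is_subspace_scale[OF assms(1)] by simp
  then have "x0 \<in> W" using \<open>a \<noteq> b\<close> by (simp add: mult.assoc[symmetric])
  then show False using assms(2) by simp
qed

lemma subspace_hyperplane_of:
  assumes W: "is_subspace W" "W \<subseteq> vecs n" and x0: "x0 \<in> vecs n" "x0 \<notin> W"
    and complement: "\<And>v. v \<in> vecs n \<Longrightarrow> \<exists>l. (\<lambda>j. v j - l * x0 j) \<in> W"
  shows "\<exists>h. h \<in> vecs n \<and> h \<noteq> (\<lambda>_. 0) \<and> W = hyperplane_of n h"
proof -
  define h where "h = (\<lambda>i. if i \<le> n then (SOME l. (\<lambda>j. unit_vec i j - l * x0 j) \<in> W) else 0)"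
  have h: "(\<lambda>j. unit_vec i j - h i * x0 j) \<in> W" if "i \<le> n" for i
    using someI_ex[OF complement[OF unit_vec_vecs[OF that]]] that by (simp add: h_def)
  have "h \<in> vecs n" by (simp add: h_def vecs_def)
  have key: "(\<lambda>j. v j - dot n v h * x0 j) \<in> W" if v: "v \<in> vecs n" for v
  proof -
    have "\<forall>i\<in>{..n}. (\<lambda>j. unit_vec i j - h i * x0 j) \<in> W" using h by simp
    from is_subspace_sum[OF W(1) finite_atMost this]
    have "(\<lambda>j. \<Sum>i\<le>n. v i * (unit_vec i j - h i * x0 j)) \<in> W" .
    moreover have "(\<Sum>i\<le>n. v i * (unit_vec i j - h i * x0 j)) = v j - dot n v h * x0 j" for j
    proof -
      have "(\<Sum>i\<le>n. v i * unit_vec i j) = v j"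
        using v by (cases "j \<le> n") (simp_all add: vecs_def if_distrib cong: if_cong)
      moreover have "(\<Sum>i\<le>n. v i * (h i * x0 j)) = dot n v h * x0 j"
        by (simp add: sum_distrib_right mult.assoc)
      ultimately show ?thesis by (simp add: right_diff_distrib sum_subtractf)
    qed
    ultimately show ?thesis by simp
  qed
  have "W = hyperplane_of n h"
  proof (intro equalityI subsetI)
    fix v assume "v \<in> W"
    then have "v \<in> vecs n" "(\<lambda>j. v j - 0 * x0 j) \<in> W" using W(2) by auto
    then show "v \<in> hyperplane_of n h" using is_subspace_complement_coeff_unique[OF W(1) x0(2)] key by blast
  next
    fix v assume "v \<in> hyperplane_of n h"
    then show "v \<in> W" using key[of v] by simp
  qed
  moreover have "h \<noteq> (\<lambda>_. 0)" using key[OF x0(1)] x0(2) by auto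
  ultimately show ?thesis using \<open>h \<in> vecs n\<close> by blast
qed

section \<open>Incidence geometry of PG(n,K)\<close>

lemma collinear_pg_points_iff:
  assumes "p = point_of a" "q = point_of b" "r = point_of c"
  shows "collinear_pts p q r \<longleftrightarrow> c \<in> span_list [a, b]"
  by (simp only: assms collinear_point_of_iff span_list_pair_iff)

lemma collinear_refl1:
  assumes "p \<in> pg_points n" "q \<in> pg_points n"
  shows "collinear_pts p q p"
proof -
  obtain a where a: "p = point_of a" using assms(1) by (rule pg_pointE)
  obtain b where b: "q = point_of b" using assms(2) by (rule pg_pointE)
  have "a = (\<lambda>i. 1 * a i + 0 * b i)" by simp
  then show ?thesis unfolding a b by (rule collinear_point_ofI)
qed

lemma collinear_refl2:
  assumes "p \<in> pg_points n" "q \<in> pg_points n"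
  shows "collinear_pts p q q"
proof -
  obtain a where a: "p = point_of a" using assms(1) by (rule pg_pointE)
  obtain b where b: "q = point_of b" using assms(2) by (rule pg_pointE)
  have "b = (\<lambda>i. 0 * a i + 1 * b i)" by simp
  then show ?thesis unfolding a b by (rule collinear_point_ofI)
qed

lemma collinear_swap:
  assumes "p \<in> pg_points n" "q \<in> pg_points n" "r \<in> pg_points n" "collinear_pts p q r"
  shows "collinear_pts q p r"
proof -
  obtain a where a: "p = point_of a" using assms(1) by (rule pg_pointE)
  obtain b where b: "q = point_of b" using assms(2) by (rule pg_pointE)
  obtain c where c: "r = point_of c" using assms(3) by (rule pg_pointE)
  obtain \<alpha> \<beta> where "c = (\<lambda>i. \<alpha> * a i + \<beta> * b i)"
    using assms(4) unfolding a b c by (rule collinear_point_ofE)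
  then have "c = (\<lambda>i. \<beta> * b i + \<alpha> * a i)" by (simp add: add.commute)
  then show ?thesis unfolding a b c by (rule collinear_point_ofI)
qed

lemma collinear_exchange:
  assumes P: "p \<in> pg_points n" "q \<in> pg_points n" "x \<in> pg_points n" "y \<in> pg_points n" "r \<in> pg_points n"
    and "collinear_pts p q x" "collinear_pts p q y" "collinear_pts p q r" "x \<noteq> y"
  shows "collinear_pts x y r"
proof -
  obtain a where a: "p = point_of a" using P(1) by (rule pg_pointE)
  obtain b where b: "q = point_of b" using P(2) by (rule pg_pointE)
  obtain u where u: "u \<noteq> (\<lambda>_. 0)" "x = point_of u" using P(3) by (rule pg_pointE)
  obtain v where v: "v \<noteq> (\<lambda>_. 0)" "y = point_of v" using P(4) by (rule pg_pointE)
  obtain w where w: "r = point_of w" using P(5) by (rule pg_pointE)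
  have "u \<in> span_list [a, b]" "v \<in> span_list [a, b]" "w \<in> span_list [a, b]"
    using assms(6-8) a b u v w collinear_pg_points_iff by blast+
  then have "w \<in> span_list [u, v]" using span_pair_exchange u v assms(9) by blast
  then show ?thesis using u v w collinear_pg_points_iff by blast
qed

lemma collinear_swap23:
  assumes P: "p \<in> pg_points n" "q \<in> pg_points n" "r \<in> pg_points n"
    and "collinear_pts p q r" "r \<noteq> p"
  shows "collinear_pts p r q"
  using collinear_exchange[OF P(1,2,1,3,2) collinear_refl1[OF P(1,2)] assms(4)
      collinear_refl2[OF P(1,2)] assms(5)[symmetric]] .

lemma collinear_rotate:
  assumes P: "p \<in> pg_points n" "q \<in> pg_points n" "r \<in> pg_points n"
    and "collinear_pts p q r" "r \<noteq> q"
  shows "collinear_pts q r p"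
  using collinear_exchange[OF P(1,2,2,3,1) collinear_refl2[OF P(1,2)] assms(4)
      collinear_refl1[OF P(1,2)] assms(5)[symmetric]] .

lemma collinear_on_line_trans:
  assumes P: "a \<in> pg_points n" "b \<in> pg_points n" "x \<in> pg_points n" "y \<in> pg_points n" "r \<in> pg_points n"
    and "a \<noteq> b" "x \<noteq> y" "collinear_pts a b x" "collinear_pts a b y" "collinear_pts x y r"
  shows "collinear_pts a b r"
proof -
  have "collinear_pts x y a"
    using collinear_exchange[OF P(1-4,1) assms(8,9) collinear_refl1[OF P(1,2)] assms(7)] .
  moreover have "collinear_pts x y b"
    using collinear_exchange[OF P(1-4,2) assms(8,9) collinear_refl2[OF P(1,2)] assms(7)] .
  ultimately show ?thesis using collinear_exchange[OF P(3,4,1,2,5) _ _ assms(10) assms(6)] by blast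
qed

lemma lines_with_two_common_points:
  assumes P: "a \<in> pg_points n" "b \<in> pg_points n" "c \<in> pg_points n" "d \<in> pg_points n"
     "x \<in> pg_points n" "y \<in> pg_points n"
    and "a \<noteq> b" "c \<noteq> d" "x \<noteq> y" "collinear_pts a b x" "collinear_pts a b y"
     "collinear_pts c d x" "collinear_pts c d y"
  shows "collinear_pts a b c"
proof -
  have "collinear_pts x y c"
    using collinear_exchange[OF P(3-6,3) assms(12,13) collinear_refl1[OF P(3,4)] assms(9)] .
  then show ?thesis using collinear_on_line_trans[OF P(1,2,5,6,3) assms(7,9,10,11)] by blast
qed

lemma not_collinear_permute:
  assumes P: "x \<in> pg_points n" "y \<in> pg_points n" "z \<in> pg_points n"
    and "x \<noteq> y" "x \<noteq> z" "y \<noteq> z" "\<not> collinear_pts x y z"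
  shows "\<not> collinear_pts y x z" "\<not> collinear_pts x z y" "\<not> collinear_pts y z x"
        "\<not> collinear_pts z x y" "\<not> collinear_pts z y x"
  using assms collinear_swap[OF P(2,1,3)] collinear_swap23[OF P(1,3,2)] collinear_swap23[OF P(2,3,1)]
    collinear_swap[OF P(3,1,2)] collinear_swap[OF P(3,2,1)] by blast+

lemma hyperplane_contains_line:
  assumes "H \<in> pg_hyperplanes n" "p \<in> pg_points n" "q \<in> pg_points n" "r \<in> pg_points n"
    and "p \<subseteq> H" "q \<subseteq> H" "collinear_pts p q r"
  shows "r \<subseteq> H"
proof -
  obtain f where f: "H = hyperplane_of n f" using assms(1) by (rule pg_hyperplaneE)
  obtain a where a: "a \<in> vecs n" "p = point_of a" using assms(2) by (rule pg_pointE)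
  obtain b where b: "b \<in> vecs n" "q = point_of b" using assms(3) by (rule pg_pointE)
  obtain c where c: "c \<in> vecs n" "r = point_of c" using assms(4) by (rule pg_pointE)
  obtain \<alpha> \<beta> where "c = (\<lambda>i. \<alpha> * a i + \<beta> * b i)"
    using assms(7) unfolding a(2) b(2) c(2) by (rule collinear_point_ofE)
  moreover have "dot n a f = 0" "dot n b f = 0"
    using point_of_subset_hyperplane_of_iff a b assms(5,6) f by auto
  ultimately have "dot n c f = 0" by (simp add: dot_lincomb)
  then show ?thesis using point_of_subset_hyperplane_of_iff[OF c(1)] c(2) f by simp
qed

lemma line_meets_hyperplane:
  assumes "H \<in> pg_hyperplanes n" "p \<in> pg_points n" "q \<in> pg_points n" "p \<noteq> q"
  shows "\<exists>r\<in>pg_points n. collinear_pts p q r \<and> r \<subseteq> H"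
proof -
  obtain f where f: "H = hyperplane_of n f" using assms(1) by (rule pg_hyperplaneE)
  obtain a where a: "a \<in> vecs n" "p = point_of a" using assms(2) by (rule pg_pointE)
  obtain b where b: "b \<in> vecs n" "q = point_of b" using assms(3) by (rule pg_pointE)
  show ?thesis
  proof (cases "dot n a f = 0")
    case True
    then have "p \<subseteq> H" using point_of_subset_hyperplane_of_iff a f by blast
    then show ?thesis using collinear_refl1 assms(2,3) by blast
  next
    case False
    define c where "c = (\<lambda>i. (- (dot n b f * inverse (dot n a f))) * a i + 1 * b i)"
    have c: "c \<in> vecs n" unfolding c_def using a b by (intro vecs_lincomb)
    have "c \<noteq> (\<lambda>_. 0)"
    proof
      assume "c = (\<lambda>_. 0)"
      then have "(1::'a) = 0" using pg_points_independent[OF assms(2-4) a(2) b(2)] unfolding c_def by blast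
      then show False by simp
    qed
    then have "point_of c \<in> pg_points n" using c point_of_in_pg_points by blast
    moreover have "dot n c f = 0" unfolding c_def dot_lincomb using False by (simp add: mult.assoc)
    then have "point_of c \<subseteq> H" using point_of_subset_hyperplane_of_iff c f by blast
    moreover have "collinear_pts p q (point_of c)" unfolding a(2) b(2) c_def by (rule collinear_point_ofI[OF refl])
    ultimately show ?thesis by blast
  qed
qed

lemma hyperplane_separating_points:
  assumes "p \<in> pg_points n" "q \<in> pg_points n" "p \<noteq> q"
  shows "\<exists>H\<in>pg_hyperplanes n. p \<subseteq> H \<and> \<not> q \<subseteq> H"
proof -
  obtain a where a: "a \<in> vecs n" "p = point_of a" using assms(1) by (rule pg_pointE)
  obtain b where b: "b \<in> vecs n" "q = point_of b" using assms(2) by (rule pg_pointE)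
  have "b \<notin> span_list [a]"
  proof
    assume "b \<in> span_list [a]"
    then have "b \<in> point_of a" by (auto simp: mem_point_of)
    then show False using point_of_eqI pg_point_rep_nonzero[OF assms(2) b(2)] assms(3) a b by blast
  qed
  then obtain h where h: "h \<in> vecs n" "h \<noteq> (\<lambda>_. 0)" "dot n a h = 0" "dot n b h \<noteq> 0"
    using separating_form[of "[a]" n b] a(1) b(1) by auto
  then have "p \<subseteq> hyperplane_of n h" "\<not> q \<subseteq> hyperplane_of n h"
    using point_of_subset_hyperplane_of_iff a b by auto
  then show ?thesis using hyperplane_of_in_pg_hyperplanes[OF h(1,2)] by blast
qed

lemma hyperplane_through_line_avoiding:
  assumes "p \<in> pg_points n" "q \<in> pg_points n" "y \<in> pg_points n" "\<not> collinear_pts p q y"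
  shows "\<exists>H\<in>pg_hyperplanes n. p \<subseteq> H \<and> q \<subseteq> H \<and> \<not> y \<subseteq> H"
proof -
  obtain a where a: "a \<in> vecs n" "p = point_of a" using assms(1) by (rule pg_pointE)
  obtain b where b: "b \<in> vecs n" "q = point_of b" using assms(2) by (rule pg_pointE)
  obtain c where c: "c \<in> vecs n" "y = point_of c" using assms(3) by (rule pg_pointE)
  have "c \<notin> span_list [a, b]" using collinear_pg_points_iff a b c assms(4) by blast
  then obtain h where h: "h \<in> vecs n" "h \<noteq> (\<lambda>_. 0)" "dot n a h = 0" "dot n b h = 0" "dot n c h \<noteq> 0"
    using separating_form[of "[a, b]" n c] a(1) b(1) c(1) by auto
  then have "p \<subseteq> hyperplane_of n h" "q \<subseteq> hyperplane_of n h" "\<not> y \<subseteq> hyperplane_of n h"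
    using point_of_subset_hyperplane_of_iff a b c by auto
  then show ?thesis using hyperplane_of_in_pg_hyperplanes[OF h(1,2)] by blast
qed

lemma exists_point_off_line:
  assumes "n \<ge> 2" "p \<in> pg_points n" "q \<in> pg_points n"
  shows "\<exists>y\<in>pg_points n. \<not> collinear_pts p q y"
proof (rule ccontr)
  assume all_on_line: "\<not> ?thesis"
  obtain a where a: "p = point_of a" using assms(2) by (rule pg_pointE)
  obtain b where b: "q = point_of b" using assms(3) by (rule pg_pointE)
  have in_span: "unit_vec k \<in> span_list [a, b]" if "k \<le> 2" for k
  proof -
    have "k \<le> n" using that assms(1) by simp
    then have "point_of (unit_vec k) \<in> pg_points n"
      using point_of_in_pg_points[OF unit_vec_vecs unit_vec_nonzero] by blast
    then have "collinear_pts p q (point_of (unit_vec k))" using all_on_line by blast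
    then show ?thesis using collinear_pg_points_iff[OF a b refl] by blast
  qed
  obtain l1 l2 l3 where l: "l1 \<noteq> 0 \<or> l2 \<noteq> 0 \<or> l3 \<noteq> 0"
      "(\<lambda>i. l1 * unit_vec 0 i + l2 * unit_vec 1 i + l3 * unit_vec 2 i) = (\<lambda>_. 0 :: 'a)"
    using span_pair_dependent[OF in_span[of 0] in_span[of 1] in_span[of 2]] by auto
  then show False using fun_cong[OF l(2), of 0] fun_cong[OF l(2), of 1] fun_cong[OF l(2), of 2] by auto
qed

lemma exists_point_off_hyperplane:
  assumes "H \<in> pg_hyperplanes n"
  shows "\<exists>p\<in>pg_points n. \<not> p \<subseteq> H"
proof -
  obtain f where f: "f \<in> vecs n" "f \<noteq> (\<lambda>_. 0)" "H = hyperplane_of n f" using assms by (rule pg_hyperplaneE)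
  obtain i where i: "i \<le> n" "f i \<noteq> 0" using f(1,2) by (rule vecs_nonzero_coordinate)
  have "point_of (unit_vec i) \<in> pg_points n"
    using point_of_in_pg_points[OF unit_vec_vecs[OF i(1)] unit_vec_nonzero] .
  moreover have "dot n (unit_vec i) f \<noteq> 0" unfolding dot_unit_vec[OF i(1)] by (rule i(2))
  then have "\<not> point_of (unit_vec i) \<subseteq> H"
    unfolding f(3) using point_of_subset_hyperplane_of_iff[OF unit_vec_vecs[OF i(1)]] by blast
  ultimately show ?thesis by blast
qed

lemma hyperplane_through_two_points:
  assumes "n \<ge> 2" "p \<in> pg_points n" "q \<in> pg_points n"
  shows "\<exists>H\<in>pg_hyperplanes n. p \<subseteq> H \<and> q \<subseteq> H"
  using exists_point_off_line[OF assms] hyperplane_through_line_avoiding[OF assms(2,3)] by blast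

lemma third_point_on_line:
  assumes "p \<in> pg_points n" "q \<in> pg_points n" "p \<noteq> q"
  shows "\<exists>r\<in>pg_points n. collinear_pts p q r \<and> r \<noteq> p \<and> r \<noteq> q"
proof -
  obtain a where a: "a \<in> vecs n" "p = point_of a" using assms(1) by (rule pg_pointE)
  obtain b where b: "b \<in> vecs n" "q = point_of b" using assms(2) by (rule pg_pointE)
  note indep = pg_points_independent[OF assms a(2) b(2)]
  define c where "c = (\<lambda>i. 1 * a i + 1 * b i)"
  have c: "c \<in> vecs n" unfolding c_def using a(1) b(1) by (rule vecs_lincomb)
  have "c \<noteq> (\<lambda>_. 0)" using indep[of 1 1] unfolding c_def by auto
  then have "point_of c \<in> pg_points n" using point_of_in_pg_points[OF c] by blast
  moreover have "collinear_pts p q (point_of c)" unfolding a(2) b(2) c_def by (rule collinear_point_ofI[OF refl])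
  moreover have "point_of c \<noteq> p"
  proof
    assume "point_of c = p"
    then obtain d where "c = (\<lambda>i. d * a i)" using in_point_of_self[of c] a(2) mem_point_of by blast
    then have "(\<lambda>i. (1 - d) * a i + 1 * b i) = (\<lambda>_. 0)"
      unfolding c_def by (simp add: fun_eq_iff algebra_simps)
    then show False using indep[of "1 - d" 1] by simp
  qed
  moreover have "point_of c \<noteq> q"
  proof
    assume "point_of c = q"
    then obtain d where "c = (\<lambda>i. d * b i)" using in_point_of_self[of c] b(2) mem_point_of by blast
    then have "(\<lambda>i. 1 * a i + (1 - d) * b i) = (\<lambda>_. 0)"
      unfolding c_def by (simp add: fun_eq_iff algebra_simps)
    then show False using indep[of 1 "1 - d"] by simp
  qed
  ultimately show ?thesis by blast
qed

lemma hyperplane_eqI_points: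
  assumes "H1 \<in> pg_hyperplanes n" "H2 \<in> pg_hyperplanes n"
    and "\<forall>p\<in>pg_points n. p \<subseteq> H1 \<longrightarrow> p \<subseteq> H2"
  shows "H1 = H2"
proof -
  obtain f where f: "f \<in> vecs n" "f \<noteq> (\<lambda>_. 0)" "H1 = hyperplane_of n f" using assms(1) by (rule pg_hyperplaneE)
  obtain g where g: "g \<in> vecs n" "g \<noteq> (\<lambda>_. 0)" "H2 = hyperplane_of n g" using assms(2) by (rule pg_hyperplaneE)
  have "x \<in> H2" if x: "x \<in> H1" for x
  proof (cases "x = (\<lambda>_. 0)")
    case False
    have xv: "x \<in> vecs n" "dot n x f = 0" using x f(3) by auto
    then have "point_of x \<in> pg_points n" "point_of x \<subseteq> H1"
      using point_of_in_pg_points[OF xv(1) False] point_of_subset_hyperplane_of_iff[OF xv(1)] f(3) by auto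
    then show ?thesis using assms(3) in_point_of_self by blast
  qed (use g(3) in \<open>simp add: vecs_def\<close>)
  then show ?thesis using hyperplane_of_subset_imp_eq[OF f(1,2) g(1,2)] f(3) g(3) by blast
qed

lemma hyperplanes_meet:
  assumes "n \<ge> 2" "H1 \<in> pg_hyperplanes n" "H2 \<in> pg_hyperplanes n"
  shows "\<exists>p\<in>pg_points n. p \<subseteq> H1 \<and> p \<subseteq> H2"
proof -
  obtain f where f: "H1 = hyperplane_of n f" using assms(2) by (rule pg_hyperplaneE)
  obtain g where g: "H2 = hyperplane_of n g" using assms(3) by (rule pg_hyperplaneE)
  define h where "h = (\<lambda>(j::nat) (i::nat). if j = 0 then f i else g i)"
  have "card {..n} > 2" using assms(1) by simp
  then obtain x where x: "\<forall>i. i \<notin> {..n} \<longrightarrow> x i = 0" "\<exists>i\<in>{..n}. x i \<noteq> 0"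
     "\<forall>j<2. (\<Sum>i\<in>{..n}. x i * h j i) = 0"
    using homogeneous_system_nontrivial_solution[of "{..n}" 2 h] by auto
  have xv: "x \<in> vecs n" using x(1) by (auto simp: vecs_def)
  have "x \<noteq> (\<lambda>_. 0)" using x(2) by auto
  moreover have "dot n x f = 0" "dot n x g = 0"
    using x(3)[rule_format, of 0] x(3)[rule_format, of 1] by (simp_all add: h_def)
  ultimately show ?thesis
    using point_of_in_pg_points[OF xv] point_of_subset_hyperplane_of_iff[OF xv] f g by blast
qed

lemma plane_line_unique:
  assumes "H1 \<in> pg_hyperplanes 2" "H2 \<in> pg_hyperplanes 2" "p \<in> pg_points 2" "q \<in> pg_points 2"
    and "p \<noteq> q" "p \<subseteq> H1" "q \<subseteq> H1" "p \<subseteq> H2" "q \<subseteq> H2"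
  shows "H1 = H2"
proof (rule ccontr)
  assume "H1 \<noteq> H2"
  obtain f where f: "f \<in> vecs 2" "f \<noteq> (\<lambda>_. 0)" "H1 = hyperplane_of 2 f" using assms(1) by (rule pg_hyperplaneE)
  obtain g where g: "g \<in> vecs 2" "g \<noteq> (\<lambda>_. 0)" "H2 = hyperplane_of 2 g" using assms(2) by (rule pg_hyperplaneE)
  obtain a where a: "a \<in> vecs 2" "p = point_of a" using assms(3) by (rule pg_pointE)
  obtain b where b: "b \<in> vecs 2" "q = point_of b" using assms(4) by (rule pg_pointE)
  have "hyperplane_of 2 f \<noteq> hyperplane_of 2 g" using \<open>H1 \<noteq> H2\<close> f(3) g(3) by simp
  then obtain u v where uv: "u \<in> vecs 2" "v \<in> vecs 2" "dot 2 u f = 1" "dot 2 u g = 0" "dot 2 v f = 0" "dot 2 v g = 1"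
    by (rule dual_vectors_exist[OF f(1,2) g(1,2)])
  have ab: "dot 2 a f = 0" "dot 2 b f = 0" "dot 2 a g = 0" "dot 2 b g = 0"
    using point_of_subset_hyperplane_of_iff a b f g assms(6-9) by auto
  \<comment> \<open>Four vectors \<open>a, b, u, v\<close> in a space of dimension 3 are dependent.\<close>
  define w where "w = (\<lambda>i::nat. if i = 0 then a else if i = 1 then b else if i = 2 then u else v)"
  have "\<forall>i\<in>{0,1,2,3}. w i \<in> vecs 2" using a(1) b(1) uv(1,2) by (auto simp: w_def)
  then obtain l where l: "\<exists>i\<in>{0,1,2,3}. l i \<noteq> 0" "\<forall>j. (\<Sum>i\<in>{0,1,2,3}. l i * w i j) = 0"
    using dependent_if_card_gt_dim[of "{0,1,2,3::nat}" 2 w] by auto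
  have comb: "(\<lambda>j. l 0 * a j + l 1 * b j + l 2 * u j + l 3 * v j) = (\<lambda>_. 0)"
    using l(2) by (simp add: w_def add.assoc)
  have dot_comb: "dot 2 (\<lambda>j. l 0 * a j + l 1 * b j + l 2 * u j + l 3 * v j) h
      = l 0 * dot 2 a h + l 1 * dot 2 b h + l 2 * dot 2 u h + l 3 * dot 2 v h" for h
    by (simp add: distrib_right sum.distrib sum_distrib_left mult.assoc)
  have dot_zero: "dot 2 (\<lambda>j. l 0 * a j + l 1 * b j + l 2 * u j + l 3 * v j) h = 0" for h
    using arg_cong[OF comb, of "\<lambda>w. dot 2 w h"] by simp
  have "l 2 = 0" using dot_comb[of f] dot_zero[of f] ab uv(3,5) by simp
  moreover have "l 3 = 0" using dot_comb[of g] dot_zero[of g] ab uv(4,6) by simp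
  ultimately have "(\<lambda>j. l 0 * a j + l 1 * b j) = (\<lambda>_. 0)" using comb by (simp add: fun_eq_iff)
  then have "l 0 = 0 \<and> l 1 = 0" using pg_points_independent[OF assms(3,4,5) a(2) b(2)] by blast
  then show False using l(1) \<open>l 2 = 0\<close> \<open>l 3 = 0\<close> by auto
qed

lemma plane_line_collinear:
  assumes "l \<in> pg_hyperplanes 2" "x \<in> pg_points 2" "y \<in> pg_points 2" "z \<in> pg_points 2"
    and "x \<noteq> y" "x \<subseteq> l" "y \<subseteq> l" "z \<subseteq> l"
  shows "collinear_pts x y z"
proof (rule ccontr)
  assume "\<not> collinear_pts x y z"
  then obtain G where G: "G \<in> pg_hyperplanes 2" "x \<subseteq> G" "y \<subseteq> G" "\<not> z \<subseteq> G"
    using hyperplane_through_line_avoiding[OF assms(2-4)] by blast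
  have "l = G" using plane_line_unique[OF assms(1) G(1) assms(2,3,5-7) G(2,3)] .
  then show False using G(4) assms(8) by simp
qed

lemma exists_point_off_line_in_hyperplane:
  assumes "n \<ge> 3" "H \<in> pg_hyperplanes n" "p \<in> pg_points n" "q \<in> pg_points n"
  shows "\<exists>t\<in>pg_points n. t \<subseteq> H \<and> \<not> collinear_pts p q t"
proof (rule ccontr)
  assume all_on_line: "\<not> ?thesis"
  obtain f where f: "f \<in> vecs n" "f \<noteq> (\<lambda>_. 0)" "H = hyperplane_of n f" using assms(2) by (rule pg_hyperplaneE)
  obtain a where a: "p = point_of a" using assms(3) by (rule pg_pointE)
  obtain b where b: "q = point_of b" using assms(4) by (rule pg_pointE)
  obtain i0 where i0: "i0 \<le> n" "f i0 \<noteq> 0" using vecs_nonzero_coordinate f(1,2) by blast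
  \<comment> \<open>The vectors \<open>x k\<close>, \<open>k \<noteq> i0\<close>, lie in \<open>H\<close>, and any three of them are independent.\<close>
  define x where "x = (\<lambda>k j. 1 * unit_vec k j + (- (f k * inverse (f i0))) * unit_vec i0 j)"
  have in_span: "x k \<in> span_list [a, b]" if "k \<le> n" "k \<noteq> i0" for k
  proof -
    have xk: "x k \<in> vecs n"
      unfolding x_def by (rule vecs_lincomb[OF unit_vec_vecs[OF that(1)] unit_vec_vecs[OF i0(1)]])
    have "x k k = 1" using that(2) by (simp add: x_def)
    then have "point_of (x k) \<in> pg_points n" using point_of_in_pg_points[OF xk] by force
    moreover have "dot n (x k) f = 0" unfolding x_def dot_lincomb dot_unit_vec[OF that(1)] dot_unit_vec[OF i0(1)]
      using i0(2) by (simp add: mult.assoc)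
    then have "point_of (x k) \<subseteq> H" using point_of_subset_hyperplane_of_iff[OF xk] f(3) by simp
    ultimately have "collinear_pts p q (point_of (x k))" using all_on_line by blast
    then show ?thesis using collinear_pg_points_iff[OF a b refl] by blast
  qed
  define k1 where "k1 = (if i0 = 0 then 3 else 0::nat)"
  define k2 where "k2 = (if i0 = 1 then 3 else 1::nat)"
  define k3 where "k3 = (if i0 = 2 then 3 else 2::nat)"
  have ks: "k1 \<le> n" "k2 \<le> n" "k3 \<le> n" "k1 \<noteq> i0" "k2 \<noteq> i0" "k3 \<noteq> i0" "k1 \<noteq> k2" "k1 \<noteq> k3" "k2 \<noteq> k3"
    using assms(1) by (auto simp: k1_def k2_def k3_def)
  have indep: "l1 = 0 \<and> l2 = 0 \<and> l3 = 0"
    if "(\<lambda>i. l1 * x k1 i + l2 * x k2 i + l3 * x k3 i) = (\<lambda>_. 0)" for l1 l2 l3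
    using fun_cong[OF that, of k1] fun_cong[OF that, of k2] fun_cong[OF that, of k3] ks
    by (simp add: x_def)
  obtain l1 l2 l3 where "l1 \<noteq> 0 \<or> l2 \<noteq> 0 \<or> l3 \<noteq> 0"
      "(\<lambda>i. l1 * x k1 i + l2 * x k2 i + l3 * x k3 i) = (\<lambda>_. 0)"
    using span_pair_dependent[OF in_span[OF ks(1,4)] in_span[OF ks(2,5)] in_span[OF ks(3,6)]] by blast
  then show False using indep by blast
qed

lemma veblen_young:
  assumes P: "q \<in> pg_points n" "r \<in> pg_points n" "q' \<in> pg_points n" "r' \<in> pg_points n" "s \<in> pg_points n"
    and "q \<noteq> q'" "s \<noteq> r" "collinear_pts q r s" "collinear_pts q' r' s"
  shows "\<exists>x\<in>pg_points n. collinear_pts q q' x \<and> collinear_pts r r' x"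
proof -
  obtain a where a: "a \<in> vecs n" "q = point_of a" using P(1) by (rule pg_pointE)
  obtain b where b: "b \<in> vecs n" "r = point_of b" using P(2) by (rule pg_pointE)
  obtain a' where a': "a' \<in> vecs n" "q' = point_of a'" using P(3) by (rule pg_pointE)
  obtain b' where b': "b' \<in> vecs n" "r' = point_of b'" using P(4) by (rule pg_pointE)
  obtain c where c: "c \<noteq> (\<lambda>_. 0)" "s = point_of c" using P(5) by (rule pg_pointE)
  obtain \<alpha> \<beta> where c1: "c = (\<lambda>i. \<alpha> * a i + \<beta> * b i)"
    using assms(8) unfolding a(2) b(2) c(2) by (rule collinear_point_ofE)
  obtain \<gamma> \<delta> where c2: "c = (\<lambda>i. \<gamma> * a' i + \<delta> * b' i)"
    using assms(9) unfolding a'(2) b'(2) c(2) by (rule collinear_point_ofE)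
  \<comment> \<open>\<open>\<alpha> a - \<gamma> a' = \<delta> b' - \<beta> b\<close> spans the common point.\<close>
  define w where "w = (\<lambda>i. \<alpha> * a i + (- \<gamma>) * a' i)"
  have w2: "w = (\<lambda>i. (- \<beta>) * b i + \<delta> * b' i)"
  proof
    fix i
    have "\<alpha> * a i + \<beta> * b i = \<gamma> * a' i + \<delta> * b' i" using fun_cong[OF c1, of i] fun_cong[OF c2, of i] by simp
    then show "w i = (- \<beta>) * b i + \<delta> * b' i" unfolding w_def by (simp add: algebra_simps)
  qed
  show ?thesis
  proof (cases "w = (\<lambda>_. 0)")
    case False
    have "w \<in> vecs n" unfolding w_def using a(1) a'(1) by (rule vecs_lincomb)
    then have "point_of w \<in> pg_points n" using point_of_in_pg_points False by blast
    moreover have "collinear_pts q q' (point_of w)" unfolding a(2) a'(2) w_def by (rule collinear_point_ofI[OF refl])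
    moreover have "collinear_pts r r' (point_of w)" unfolding b(2) b'(2) w2 by (rule collinear_point_ofI[OF refl])
    ultimately show ?thesis by blast
  next
    case True
    then have "\<alpha> = 0" using pg_points_independent[OF P(1,3) assms(6) a(2) a'(2)] unfolding w_def by blast
    then have "c \<in> point_of b" using c1 mem_point_of by auto
    then have "s = r" using point_of_eqI c b(2) by blast
    then show ?thesis using assms(7) by simp
  qed
qed

lemma triangle_section_lincomb:
  fixes x1 x2 x3 :: "nat \<Rightarrow> 'k::division_ring"
  assumes q1: "qv = (\<lambda>i. a1 * x1 i + a2 * x2 i)" and r1: "rv = (\<lambda>i. b1 * x1 i + b3 * x3 i)"
    and t1: "tv = (\<lambda>i. g2 * x2 i + g3 * x3 i)"
    and "qv \<noteq> (\<lambda>_. 0)" "rv \<noteq> (\<lambda>_. 0)"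
    and "dot n x1 f \<noteq> 0" "dot n qv f = 0" "dot n rv f = 0" "dot n tv f = 0"
  shows "\<exists>\<alpha> \<beta>. tv = (\<lambda>i. \<alpha> * qv i + \<beta> * rv i)"
proof -
  define f1 where "f1 = dot n x1 f"
  define f2 where "f2 = dot n x2 f"
  define f3 where "f3 = dot n x3 f"
  have "f1 \<noteq> 0" using assms(6) f1_def by simp
  have eq: "a1 * f1 + a2 * f2 = 0" using assms(7) unfolding q1 dot_lincomb f1_def f2_def .
  have er: "b1 * f1 + b3 * f3 = 0" using assms(8) unfolding r1 dot_lincomb f1_def f3_def .
  have et: "g2 * f2 + g3 * f3 = 0" using assms(9) unfolding t1 dot_lincomb f2_def f3_def .
  have "a2 \<noteq> 0" using eq \<open>f1 \<noteq> 0\<close> assms(4) q1 by auto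
  have "b3 \<noteq> 0" using er \<open>f1 \<noteq> 0\<close> assms(5) r1 by auto
  \<comment> \<open>The \<open>x1\<close>-coefficient \<open>k\<close> of the candidate combination of \<open>qv\<close> and \<open>rv\<close> must vanish, since \<open>f1 \<noteq> 0\<close>.\<close>
  define k where "k = g2 * inverse a2 * a1 + g3 * inverse b3 * b1"
  have A: "a1 * f1 = - (a2 * f2)" and B: "b1 * f1 = - (b3 * f3)"
    using eq er by (simp_all add: eq_neg_iff_add_eq_0)
  have "k * f1 = g2 * inverse a2 * (a1 * f1) + g3 * inverse b3 * (b1 * f1)"
    by (simp add: k_def distrib_right mult.assoc)
  also have "\<dots> = g2 * inverse a2 * (- (a2 * f2)) + g3 * inverse b3 * (- (b3 * f3))"
    by (simp only: A B)
  also have "\<dots> = - (g2 * f2 + g3 * f3)"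
    using \<open>a2 \<noteq> 0\<close> \<open>b3 \<noteq> 0\<close> by (simp add: mult.assoc[symmetric]) (simp add: mult.assoc)
  also have "\<dots> = 0" using et by simp
  finally have "k = 0" using \<open>f1 \<noteq> 0\<close> by simp
  have "tv = (\<lambda>i. (g2 * inverse a2) * qv i + (g3 * inverse b3) * rv i)"
  proof
    fix i
    have "(g2 * inverse a2) * qv i + (g3 * inverse b3) * rv i
        = k * x1 i + g2 * (inverse a2 * a2) * x2 i + g3 * (inverse b3 * b3) * x3 i"
      unfolding q1 r1 k_def by (simp add: algebra_simps)
    also have "\<dots> = tv i" using \<open>k = 0\<close> \<open>a2 \<noteq> 0\<close> \<open>b3 \<noteq> 0\<close> t1 by simp
    finally show "tv i = (g2 * inverse a2) * qv i + (g3 * inverse b3) * rv i" by simp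
  qed
  then show ?thesis by blast
qed

lemma triangle_section_collinear:
  assumes K: "K \<in> pg_hyperplanes n"
    and P: "c1 \<in> pg_points n" "c2 \<in> pg_points n" "c3 \<in> pg_points n"
      "q \<in> pg_points n" "r \<in> pg_points n" "t \<in> pg_points n"
    and sides: "collinear_pts c1 c2 q" "collinear_pts c1 c3 r" "collinear_pts c2 c3 t"
    and in_K: "q \<subseteq> K" "r \<subseteq> K" "t \<subseteq> K" "\<not> c1 \<subseteq> K"
  shows "collinear_pts q r t"
proof -
  obtain f where f: "K = hyperplane_of n f" using K by (rule pg_hyperplaneE)
  obtain x1 where x1: "x1 \<in> vecs n" "c1 = point_of x1" using P(1) by (rule pg_pointE)
  obtain x2 where x2: "c2 = point_of x2" using P(2) by (rule pg_pointE)
  obtain x3 where x3: "c3 = point_of x3" using P(3) by (rule pg_pointE)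
  obtain qv where qv: "qv \<in> vecs n" "qv \<noteq> (\<lambda>_. 0)" "q = point_of qv" using P(4) by (rule pg_pointE)
  obtain rv where rv: "rv \<in> vecs n" "rv \<noteq> (\<lambda>_. 0)" "r = point_of rv" using P(5) by (rule pg_pointE)
  obtain tv where tv: "tv \<in> vecs n" "t = point_of tv" using P(6) by (rule pg_pointE)
  obtain a1 a2 where q1: "qv = (\<lambda>i. a1 * x1 i + a2 * x2 i)"
    using sides(1) unfolding x1(2) x2 qv(3) by (rule collinear_point_ofE)
  obtain b1 b3 where r1: "rv = (\<lambda>i. b1 * x1 i + b3 * x3 i)"
    using sides(2) unfolding x1(2) x3 rv(3) by (rule collinear_point_ofE)
  obtain g2 g3 where t1: "tv = (\<lambda>i. g2 * x2 i + g3 * x3 i)"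
    using sides(3) unfolding x2 x3 tv(2) by (rule collinear_point_ofE)
  have "dot n x1 f \<noteq> 0" using point_of_subset_hyperplane_of_iff[OF x1(1)] x1(2) f in_K(4) by simp
  moreover have "dot n qv f = 0" using point_of_subset_hyperplane_of_iff[OF qv(1)] qv(3) f in_K(1) by simp
  moreover have "dot n rv f = 0" using point_of_subset_hyperplane_of_iff[OF rv(1)] rv(3) f in_K(2) by simp
  moreover have "dot n tv f = 0" using point_of_subset_hyperplane_of_iff[OF tv(1)] tv(2) f in_K(3) by simp
  ultimately obtain \<alpha> \<beta> where "tv = (\<lambda>i. \<alpha> * qv i + \<beta> * rv i)"
    using triangle_section_lincomb[OF q1 r1 t1 qv(2) rv(2)] by blast
  then show ?thesis unfolding qv(3) rv(3) tv(2) by (rule collinear_point_ofI)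
qed

lemma pg_hyperplanes_inter_subsetI:
  assumes "H1 \<in> pg_hyperplanes n" "H2 \<in> pg_hyperplanes n" "B \<in> pg_hyperplanes n"
    and "\<forall>p\<in>pg_points n. p \<subseteq> H1 \<and> p \<subseteq> H2 \<longrightarrow> p \<subseteq> B"
  shows "H1 \<inter> H2 \<subseteq> B"
proof
  fix x assume x: "x \<in> H1 \<inter> H2"
  show "x \<in> B"
  proof (cases "x = (\<lambda>_. 0)")
    case False
    have xv: "x \<in> vecs n" using x pg_hyperplanes_subset_vecs[OF assms(1)] by blast
    have "point_of x \<subseteq> H1" "point_of x \<subseteq> H2"
      using x pg_point_subset_hyperplane_iff[OF assms(1) xv False]
        pg_point_subset_hyperplane_iff[OF assms(2) xv False] by auto
    then have "point_of x \<subseteq> B" using assms(4) point_of_in_pg_points[OF xv False] by blast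
    then show ?thesis using pg_point_subset_hyperplane_iff[OF assms(3) xv False] by simp
  qed (use zero_in_pg_hyperplane[OF assms(3)] in simp)
qed

lemma pencil_meet_subset:
  assumes "H1 \<in> pg_hyperplanes n" "H2 \<in> pg_hyperplanes n" "B \<in> pg_hyperplanes n"
    and "H1 \<noteq> H2" "H1 \<inter> H2 \<subseteq> B" "B \<noteq> H1"
  shows "H1 \<inter> B \<subseteq> H2"
proof -
  obtain f where f: "f \<in> vecs n" "f \<noteq> (\<lambda>_. 0)" "H1 = hyperplane_of n f" using assms(1) by (rule pg_hyperplaneE)
  obtain g where g: "g \<in> vecs n" "g \<noteq> (\<lambda>_. 0)" "H2 = hyperplane_of n g" using assms(2) by (rule pg_hyperplaneE)
  obtain b where b: "b \<in> vecs n" "b \<noteq> (\<lambda>_. 0)" "B = hyperplane_of n b" using assms(3) by (rule pg_hyperplaneE)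
  have "hyperplane_of n f \<noteq> hyperplane_of n g" using assms(4) f(3) g(3) by simp
  then obtain u v where uv: "u \<in> vecs n" "v \<in> vecs n" "dot n u f = 1" "dot n u g = 0" "dot n v f = 0" "dot n v g = 1"
    by (rule dual_vectors_exist[OF f(1,2) g(1,2)])
  have "hyperplane_of n f \<inter> hyperplane_of n g \<subseteq> hyperplane_of n b"
    using assms(5) unfolding f(3) g(3) b(3) .
  note decomp = form_decompose[OF uv this]
  have "dot n v b \<noteq> 0"
  proof
    assume "dot n v b = 0"
    then have "hyperplane_of n f \<subseteq> hyperplane_of n b" using decomp by auto
    then show False using hyperplane_of_subset_imp_eq[OF f(1,2) b(1,2)] assms(6) f(3) b(3) by simp
  qed
  then show ?thesis using decomp f(3) g(3) b(3) by auto
qed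

lemma pencil_member_through:
  assumes "H1 \<in> pg_hyperplanes n" "H2 \<in> pg_hyperplanes n" "H1 \<noteq> H2" "x \<in> pg_points n"
  shows "\<exists>B\<in>pg_hyperplanes n. H1 \<inter> H2 \<subseteq> B \<and> x \<subseteq> B"
proof -
  obtain f where f: "f \<in> vecs n" "f \<noteq> (\<lambda>_. 0)" "H1 = hyperplane_of n f" using assms(1) by (rule pg_hyperplaneE)
  obtain g where g: "g \<in> vecs n" "g \<noteq> (\<lambda>_. 0)" "H2 = hyperplane_of n g" using assms(2) by (rule pg_hyperplaneE)
  obtain x0 where x0: "x0 \<in> vecs n" "x = point_of x0" using assms(4) by (rule pg_pointE)
  show ?thesis
  proof (cases "dot n x0 f = 0")
    case True
    then have "x \<subseteq> H1" using point_of_subset_hyperplane_of_iff[OF x0(1)] x0(2) f(3) by simp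
    then show ?thesis using assms(1) by blast
  next
    case False
    \<comment> \<open>The member \<open>g + c f\<close> of the pencil vanishing at \<open>x0\<close>.\<close>
    define c where "c = - (inverse (dot n x0 f) * dot n x0 g)"
    define b where "b = (\<lambda>i. g i * 1 + f i * c)"
    have dot_b: "dot n y b = dot n y g + dot n y f * c" for y unfolding b_def dot_lincomb_right by simp
    have "b \<in> vecs n" unfolding b_def using g(1) f(1) by (rule vecs_lincomb_right)
    moreover have "b \<noteq> (\<lambda>_. 0)"
    proof
      assume "b = (\<lambda>_. 0)"
      then have "dot n y g = dot n y f * (- c)" for y using dot_b[of y] by (simp add: eq_neg_iff_add_eq_0)
      then have "hyperplane_of n f \<subseteq> hyperplane_of n g" by auto
      then show False using hyperplane_of_subset_imp_eq[OF f(1,2) g(1,2)] assms(3) f(3) g(3) by simp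
    qed
    moreover have "dot n x0 b = 0" unfolding dot_b c_def using False by (simp add: mult.assoc[symmetric])
    then have "x \<subseteq> hyperplane_of n b" using point_of_subset_hyperplane_of_iff[OF x0(1)] x0(2) by simp
    moreover have "H1 \<inter> H2 \<subseteq> hyperplane_of n b" using f(3) g(3) dot_b by auto
    ultimately show ?thesis using hyperplane_of_in_pg_hyperplanes by blast
  qed
qed

lemma pencil_member_form:
  assumes uv: "u \<in> vecs n" "v \<in> vecs n" "dot n u f = 1" "dot n u g = 0" "dot n v f = 0" "dot n v g = 1"
    and a: "a \<in> vecs n" "a \<noteq> (\<lambda>_. 0)" "hyperplane_of n f \<inter> hyperplane_of n g \<subseteq> hyperplane_of n a"
    and x0: "x0 \<in> vecs n" "dot n x0 a = 0" "dot n x0 f \<noteq> 0"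
  shows "dot n v a \<noteq> 0"
    and "\<forall>y\<in>vecs n. dot n y a = (dot n y f * (- (inverse (dot n x0 f) * dot n x0 g)) + dot n y g) * dot n v a"
proof -
  have decomp: "dot n y a = dot n y f * dot n u a + dot n y g * dot n v a" if "y \<in> vecs n" for y
    using form_decompose[OF uv a(3) that] .
  have "dot n x0 f * dot n u a = - (dot n x0 g * dot n v a)"
    using decomp[OF x0(1)] x0(2) by (simp add: eq_neg_iff_add_eq_0)
  then have "inverse (dot n x0 f) * (dot n x0 f * dot n u a) = inverse (dot n x0 f) * (- (dot n x0 g * dot n v a))"
    by simp
  then have ua: "dot n u a = - (inverse (dot n x0 f) * dot n x0 g) * dot n v a"
    using x0(3) by (simp add: mult.assoc[symmetric])
  show "dot n v a \<noteq> 0"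
  proof
    assume "dot n v a = 0"
    then have "a = (\<lambda>_. 0)" using dot_eq_zero_imp_zero[OF a(1)] decomp ua by simp
    then show False using a(2) by simp
  qed
  show "\<forall>y\<in>vecs n. dot n y a = (dot n y f * (- (inverse (dot n x0 f) * dot n x0 g)) + dot n y g) * dot n v a"
    using decomp ua by (simp add: distrib_right left_diff_distrib mult.assoc)
qed

lemma pencil_member_unique:
  assumes "H1 \<in> pg_hyperplanes n" "H2 \<in> pg_hyperplanes n" "A \<in> pg_hyperplanes n" "B \<in> pg_hyperplanes n"
    and "H1 \<noteq> H2" "H1 \<inter> H2 \<subseteq> A" "H1 \<inter> H2 \<subseteq> B"
    and "x \<in> pg_points n" "x \<subseteq> A" "x \<subseteq> B" "\<not> x \<subseteq> H1"
  shows "A = B"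
proof -
  obtain f where f: "f \<in> vecs n" "f \<noteq> (\<lambda>_. 0)" "H1 = hyperplane_of n f" using assms(1) by (rule pg_hyperplaneE)
  obtain g where g: "g \<in> vecs n" "g \<noteq> (\<lambda>_. 0)" "H2 = hyperplane_of n g" using assms(2) by (rule pg_hyperplaneE)
  obtain a where a: "a \<in> vecs n" "a \<noteq> (\<lambda>_. 0)" "A = hyperplane_of n a" using assms(3) by (rule pg_hyperplaneE)
  obtain b where b: "b \<in> vecs n" "b \<noteq> (\<lambda>_. 0)" "B = hyperplane_of n b" using assms(4) by (rule pg_hyperplaneE)
  obtain x0 where x0: "x0 \<in> vecs n" "x = point_of x0" using assms(8) by (rule pg_pointE)
  have "hyperplane_of n f \<noteq> hyperplane_of n g" using assms(5) f(3) g(3) by simp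
  then obtain u v where uv: "u \<in> vecs n" "v \<in> vecs n" "dot n u f = 1" "dot n u g = 0" "dot n v f = 0" "dot n v g = 1"
    by (rule dual_vectors_exist[OF f(1,2) g(1,2)])
  have x0_a: "dot n x0 a = 0" and x0_b: "dot n x0 b = 0" and x0_f: "dot n x0 f \<noteq> 0"
    using point_of_subset_hyperplane_of_iff[OF x0(1)] x0(2) a(3) b(3) f(3) assms(9-11) by simp_all
  have "hyperplane_of n f \<inter> hyperplane_of n g \<subseteq> hyperplane_of n a"
    using assms(6) unfolding f(3) g(3) a(3) .
  note form_a = pencil_member_form[OF uv a(1,2) this x0(1) x0_a x0_f]
  have "hyperplane_of n f \<inter> hyperplane_of n g \<subseteq> hyperplane_of n b"
    using assms(7) unfolding f(3) g(3) b(3) .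
  note form_b = pencil_member_form[OF uv b(1,2) this x0(1) x0_b x0_f]
  define k where "k = - (inverse (dot n x0 f) * dot n x0 g)"
  have mem_A: "y \<in> A \<longleftrightarrow> y \<in> vecs n \<and> dot n y f * k + dot n y g = 0" for y
    using form_a a(3) unfolding k_def by auto
  have mem_B: "y \<in> B \<longleftrightarrow> y \<in> vecs n \<and> dot n y f * k + dot n y g = 0" for y
    using form_b b(3) unfolding k_def by auto
  show ?thesis by (rule set_eqI) (simp only: mem_A mem_B)
qed

definition quadrangle :: "(nat \<Rightarrow> 'k::division_ring) set \<Rightarrow> (nat \<Rightarrow> 'k) set \<Rightarrow> (nat \<Rightarrow> 'k) set \<Rightarrow> (nat \<Rightarrow> 'k) set \<Rightarrow> bool" where
  "quadrangle a b c d \<longleftrightarrow> distinct [a, b, c, d] \<and>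
     (\<forall>x\<in>{a, b, c, d}. \<forall>y\<in>{a, b, c, d}. \<forall>z\<in>{a, b, c, d}. distinct [x, y, z] \<longrightarrow> \<not> collinear_pts x y z)"

lemma quadrangleI:
  assumes P: "a \<in> pg_points n" "b \<in> pg_points n" "c \<in> pg_points n" "d \<in> pg_points n"
    and "distinct [a, b, c, d]"
    and "\<not> collinear_pts a b c" "\<not> collinear_pts a b d" "\<not> collinear_pts a c d" "\<not> collinear_pts b c d"
  shows "quadrangle a b c d"
  unfolding quadrangle_def
proof (intro conjI ballI impI)
  from assms(5) have ne: "a \<noteq> b" "a \<noteq> c" "a \<noteq> d" "b \<noteq> c" "b \<noteq> d" "c \<noteq> d" by auto
  note perms = not_collinear_permute[OF P(1,2,3) ne(1,2,4) assms(6)]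
    not_collinear_permute[OF P(1,2,4) ne(1,3,5) assms(7)]
    not_collinear_permute[OF P(1,3,4) ne(2,3,6) assms(8)]
    not_collinear_permute[OF P(2,3,4) ne(4,5,6) assms(9)]
  fix x y z assume xyz: "x \<in> {a, b, c, d}" "y \<in> {a, b, c, d}" "z \<in> {a, b, c, d}" "distinct [x, y, z]"
  from xyz(1) consider "x = a" | "x = b" | "x = c" | "x = d" by blast
  then show "\<not> collinear_pts x y z"
    by cases (use xyz assms(6-9) perms in \<open>(elim insertE; auto)+\<close>)
qed (rule assms(5))

section \<open>Collineations\<close>

locale pg_collineation =
  fixes n :: nat and \<theta> :: "(nat \<Rightarrow> 'k::division_ring) set \<Rightarrow> (nat \<Rightarrow> 'k) set"
  assumes collineation: "collineation n \<theta>"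
begin

lemma image_pg_point: "p \<in> pg_points n \<Longrightarrow> \<theta> p \<in> pg_points n"
  using collineation unfolding collineation_def bij_betw_def by blast

lemma image_eq_iff: "p \<in> pg_points n \<Longrightarrow> q \<in> pg_points n \<Longrightarrow> \<theta> p = \<theta> q \<longleftrightarrow> p = q"
  using collineation unfolding collineation_def bij_betw_def inj_on_def by blast

lemma pg_point_preimage: "x \<in> pg_points n \<Longrightarrow> \<exists>p\<in>pg_points n. \<theta> p = x"
  using collineation unfolding collineation_def bij_betw_def by (metis imageE)

lemma collinear_image_iff:
  "p \<in> pg_points n \<Longrightarrow> q \<in> pg_points n \<Longrightarrow> r \<in> pg_points n \<Longrightarrow>
    collinear_pts (\<theta> p) (\<theta> q) (\<theta> r) \<longleftrightarrow> collinear_pts p q r"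
  using collineation unfolding collineation_def by blast

lemma subset_hyp_image_iff:
  assumes "x \<in> pg_points n"
  shows "x \<subseteq> hyp_image n \<theta> H \<longleftrightarrow> (\<exists>p\<in>pg_points n. p \<subseteq> H \<and> \<theta> p = x)"
proof
  assume "x \<subseteq> hyp_image n \<theta> H"
  moreover obtain v where v: "v \<noteq> (\<lambda>_. 0)" "x = point_of v" using assms by (rule pg_pointE)
  ultimately obtain p where p: "p \<in> pg_points n" "p \<subseteq> H" "v \<in> \<theta> p"
    unfolding hyp_image_def using in_point_of_self by blast
  obtain w where "\<theta> p = point_of w" using image_pg_point[OF p(1)] by (rule pg_pointE)
  then have "\<theta> p = x" using point_of_eqI[OF _ v(1)] p(3) v(2) by simp
  then show "\<exists>p\<in>pg_points n. p \<subseteq> H \<and> \<theta> p = x" using p by blast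
qed (auto simp: hyp_image_def)

lemma image_subset_hyp_image: "p \<in> pg_points n \<Longrightarrow> p \<subseteq> H \<Longrightarrow> \<theta> p \<subseteq> hyp_image n \<theta> H"
  using subset_hyp_image_iff image_pg_point by blast

lemma hyp_image_subset_vecs: "hyp_image n \<theta> H \<subseteq> vecs n"
  unfolding hyp_image_def using image_pg_point pg_points_subset_vecs by blast

lemma hyp_image_is_subspace:
  assumes "n \<ge> 2" "H \<in> pg_hyperplanes n"
  shows "is_subspace (hyp_image n \<theta> H)"
  unfolding is_subspace_def
proof (intro conjI ballI allI)
  obtain p where "p \<in> pg_points n" "p \<subseteq> H" using hyperplanes_meet[OF assms(1,2,2)] by blast
  moreover obtain w where "\<theta> p = point_of w" using image_pg_point[OF \<open>p \<in> pg_points n\<close>] by (rule pg_pointE)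
  ultimately show zero: "(\<lambda>_. 0) \<in> hyp_image n \<theta> H"
    using image_subset_hyp_image zero_in_point_of by blast
  fix x y \<alpha> \<beta>
  assume x: "x \<in> hyp_image n \<theta> H" and y: "y \<in> hyp_image n \<theta> H"
  define z where "z = (\<lambda>i. \<alpha> * x i + \<beta> * y i)"
  show "z \<in> hyp_image n \<theta> H"
  proof (cases "z = (\<lambda>_. 0)")
    case False
    obtain p1 where p1: "p1 \<in> pg_points n" "p1 \<subseteq> H" "x \<in> \<theta> p1" using x unfolding hyp_image_def by blast
    obtain p2 where p2: "p2 \<in> pg_points n" "p2 \<subseteq> H" "y \<in> \<theta> p2" using y unfolding hyp_image_def by blast
    obtain x1 where x1: "\<theta> p1 = point_of x1" using image_pg_point[OF p1(1)] by (rule pg_pointE)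
    obtain y1 where y1: "\<theta> p2 = point_of y1" using image_pg_point[OF p2(1)] by (rule pg_pointE)
    obtain c1 c2 where "x = (\<lambda>i. c1 * x1 i)" "y = (\<lambda>i. c2 * y1 i)"
      using p1(3) p2(3) x1 y1 mem_point_of by blast
    then have "z = (\<lambda>i. (\<alpha> * c1) * x1 i + (\<beta> * c2) * y1 i)" by (simp add: z_def mult.assoc)
    then have col: "collinear_pts (\<theta> p1) (\<theta> p2) (point_of z)"
      unfolding x1 y1 by (rule collinear_point_ofI)
    have "z \<in> vecs n" using hyp_image_subset_vecs x y unfolding z_def by (intro vecs_lincomb) auto
    then obtain p3 where p3: "p3 \<in> pg_points n" "\<theta> p3 = point_of z"
      using pg_point_preimage point_of_in_pg_points[OF _ False] by blast
    have "collinear_pts p1 p2 p3" using collinear_image_iff[OF p1(1) p2(1) p3(1)] col p3(2) by simp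
    then have "p3 \<subseteq> H" using hyperplane_contains_line assms(2) p1 p2 p3(1) by blast
    then show ?thesis using image_subset_hyp_image[OF p3(1)] p3(2) in_point_of_self by blast
  qed (use zero in simp)
qed

lemma hyp_image_complement:
  assumes "n \<ge> 2" "H \<in> pg_hyperplanes n" "p \<in> pg_points n" "\<not> p \<subseteq> H" "\<theta> p = point_of x0"
    and "v \<in> vecs n"
  shows "\<exists>l. (\<lambda>j. v j - l * x0 j) \<in> hyp_image n \<theta> H"
proof (cases "v \<in> \<theta> p")
  case True
  then obtain c where "v = (\<lambda>i. c * x0 i)" using assms(5) mem_point_of by blast
  moreover have "(\<lambda>_. 0) \<in> hyp_image n \<theta> H"
    using hyp_image_is_subspace[OF assms(1,2)] unfolding is_subspace_def by blast
  ultimately show ?thesis by (intro exI[of _ c]) simp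
next
  case False
  then have "v \<noteq> (\<lambda>_. 0)" using assms(5) zero_in_point_of by auto
  then obtain pv where pv: "pv \<in> pg_points n" "\<theta> pv = point_of v"
    using pg_point_preimage point_of_in_pg_points[OF assms(6)] by blast
  have "p \<noteq> pv" using False pv(2) in_point_of_self by auto
  then obtain r where r: "r \<in> pg_points n" "collinear_pts p pv r" "r \<subseteq> H"
    using line_meets_hyperplane[OF assms(2,3) pv(1)] by blast
  obtain z where z: "z \<noteq> (\<lambda>_. 0)" "\<theta> r = point_of z" using image_pg_point[OF r(1)] by (rule pg_pointE)
  have "collinear_pts (\<theta> p) (\<theta> pv) (\<theta> r)" using collinear_image_iff[OF assms(3) pv(1) r(1)] r(2) by simp
  then obtain \<alpha> \<beta> where z_eq: "z = (\<lambda>i. \<alpha> * x0 i + \<beta> * v i)"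
    unfolding assms(5) pv(2) z(2) by (rule collinear_point_ofE)
  have "z \<in> hyp_image n \<theta> H" using image_subset_hyp_image[OF r(1,3)] z(2) in_point_of_self by blast
  then have "(\<lambda>i. inverse \<beta> * z i) \<in> hyp_image n \<theta> H"
    using is_subspace_scale hyp_image_is_subspace[OF assms(1,2)] by blast
  moreover have "\<beta> \<noteq> 0"
  proof
    assume "\<beta> = 0"
    then have "z \<in> \<theta> p" using z_eq assms(5) mem_point_of by auto
    then have "\<theta> r = \<theta> p" using point_of_eqI[OF _ z(1)] z(2) assms(5) by simp
    then show False using image_eq_iff[OF r(1) assms(3)] r(3) assms(4) by simp
  qed
  then have "(\<lambda>i. inverse \<beta> * z i) = (\<lambda>j. v j - (- (inverse \<beta> * \<alpha>)) * x0 j)"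
    by (simp add: z_eq distrib_left mult.assoc[symmetric] add.commute)
  ultimately show ?thesis by (intro exI[of _ "- (inverse \<beta> * \<alpha>)"]) simp
qed

lemma hyp_image_pg_hyperplane:
  assumes "n \<ge> 2" "H \<in> pg_hyperplanes n"
  shows "hyp_image n \<theta> H \<in> pg_hyperplanes n"
proof -
  obtain p where p: "p \<in> pg_points n" "\<not> p \<subseteq> H"
    using exists_point_off_hyperplane[OF assms(2)] by blast
  obtain x0 where x0: "x0 \<in> vecs n" "\<theta> p = point_of x0" using image_pg_point[OF p(1)] by (rule pg_pointE)
  have "x0 \<notin> hyp_image n \<theta> H"
  proof
    assume "x0 \<in> hyp_image n \<theta> H"
    then have "\<theta> p \<subseteq> hyp_image n \<theta> H"
      using x0(2) is_subspace_scale hyp_image_is_subspace[OF assms] by (auto simp: mem_point_of)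
    then obtain p' where "p' \<in> pg_points n" "p' \<subseteq> H" "\<theta> p' = \<theta> p"
      using subset_hyp_image_iff image_pg_point[OF p(1)] by blast
    then show False using image_eq_iff p by blast
  qed
  with subspace_hyperplane_of[OF hyp_image_is_subspace[OF assms] hyp_image_subset_vecs x0(1)]
  obtain h where "h \<in> vecs n" "h \<noteq> (\<lambda>_. 0)" "hyp_image n \<theta> H = hyperplane_of n h"
    using hyp_image_complement[OF assms p x0(2)] by blast
  then show ?thesis using hyperplane_of_in_pg_hyperplanes by simp
qed

definition centre :: "(nat \<Rightarrow> 'k) set \<Rightarrow> bool" where
  "centre c \<longleftrightarrow> c \<in> pg_points n \<and> \<theta> c = c \<and> (\<forall>x\<in>pg_points n. x \<noteq> c \<longrightarrow> collinear_pts c x (\<theta> x))"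

lemma centre_fixes_line:
  assumes "centre c"
    and xy: "x \<in> pg_points n" "y \<in> pg_points n" "\<theta> x = x" "\<theta> y = y" "x \<noteq> y" "\<not> collinear_pts x y c"
    and z: "z \<in> pg_points n" "collinear_pts x y z"
  shows "\<theta> z = z"
proof (rule ccontr)
  assume moved: "\<theta> z \<noteq> z"
  have c: "c \<in> pg_points n" using assms(1) unfolding centre_def by blast
  have "z \<noteq> c" using xy(6) z(2) by blast
  have "collinear_pts x y (\<theta> z)" using collinear_image_iff[OF xy(1,2) z(1)] xy(3,4) z(2) by simp
  moreover have "collinear_pts c z (\<theta> z)" using assms(1) z(1) \<open>z \<noteq> c\<close> unfolding centre_def by blast
  ultimately have "collinear_pts x y c"
    using lines_with_two_common_points[OF xy(1,2) c z(1) z(1) image_pg_point[OF z(1)] xy(5)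
        \<open>z \<noteq> c\<close>[symmetric] moved[symmetric] z(2) _ collinear_refl2[OF c z(1)]] by blast
  then show False using xy(6) by contradiction
qed

lemma fixed_points_on_fixed_line:
  assumes "n = 2" "p \<in> pg_points n" "q \<in> pg_points n" "p \<noteq> q" "\<theta> p = p" "\<theta> q = q"
  shows "\<exists>l\<in>pg_hyperplanes n. p \<subseteq> l \<and> q \<subseteq> l \<and> hyp_image n \<theta> l = l"
proof -
  obtain l where l: "l \<in> pg_hyperplanes n" "p \<subseteq> l" "q \<subseteq> l"
    using hyperplane_through_two_points[OF _ assms(2,3)] assms(1) by auto
  have "hyp_image n \<theta> l \<in> pg_hyperplanes n" using hyp_image_pg_hyperplane[OF _ l(1)] assms(1) by simp
  moreover have "p \<subseteq> hyp_image n \<theta> l" "q \<subseteq> hyp_image n \<theta> l"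
    using image_subset_hyp_image[OF assms(2) l(2)] image_subset_hyp_image[OF assms(3) l(3)] assms(5,6) by auto
  ultimately have "hyp_image n \<theta> l = l"
    using plane_line_unique[of "hyp_image n \<theta> l" l p q] l assms(1-4) by simp
  then show ?thesis using l by blast
qed

lemma fixed_lines_meet_in_fixed_point:
  assumes "n = 2" "l \<in> pg_hyperplanes n" "m \<in> pg_hyperplanes n"
    and "hyp_image n \<theta> l = l" "hyp_image n \<theta> m = m" "l \<noteq> m"
  shows "\<exists>x\<in>pg_points n. x \<subseteq> l \<and> x \<subseteq> m \<and> \<theta> x = x"
proof -
  obtain x where x: "x \<in> pg_points n" "x \<subseteq> l" "x \<subseteq> m" using hyperplanes_meet[OF _ assms(2,3)] assms(1) by auto
  have "\<theta> x \<subseteq> l" "\<theta> x \<subseteq> m"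
    using image_subset_hyp_image[OF x(1,2)] image_subset_hyp_image[OF x(1,3)] assms(4,5) by auto
  then have "\<theta> x = x"
    using plane_line_unique[of l m "\<theta> x" x] image_pg_point[OF x(1)] x assms(1-3,6) by auto
  then show ?thesis using x by blast
qed

lemma fixed_subplane:
  assumes "n = 2" "quadrangle a b c d" "\<forall>x\<in>{a, b, c, d}. x \<in> pg_points n \<and> \<theta> x = x"
  shows "subplane {p \<in> pg_points 2. \<theta> p = p} {l \<in> pg_hyperplanes 2. hyp_image 2 \<theta> l = l}"
  unfolding subplane_def quadrangle_def[symmetric]
proof (intro conjI ballI impI)
  show "\<exists>a\<in>{p \<in> pg_points 2. \<theta> p = p}. \<exists>b\<in>{p \<in> pg_points 2. \<theta> p = p}.
      \<exists>c\<in>{p \<in> pg_points 2. \<theta> p = p}. \<exists>d\<in>{p \<in> pg_points 2. \<theta> p = p}. quadrangle a b c d"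
    using assms by auto
next
  fix p q assume pq: "p \<in> {p \<in> pg_points 2. \<theta> p = p}" "q \<in> {p \<in> pg_points 2. \<theta> p = p}" "p \<noteq> q"
  then have "p \<in> pg_points n" "q \<in> pg_points n" "\<theta> p = p" "\<theta> q = q" using assms(1) by auto
  then obtain l where "l \<in> pg_hyperplanes n" "p \<subseteq> l" "q \<subseteq> l" "hyp_image n \<theta> l = l"
    using fixed_points_on_fixed_line[OF assms(1) _ _ pq(3)] by blast
  then show "\<exists>l\<in>{l \<in> pg_hyperplanes 2. hyp_image 2 \<theta> l = l}. p \<subseteq> l \<and> q \<subseteq> l"
    using assms(1) by auto
next
  fix l m assume lm: "l \<in> {l \<in> pg_hyperplanes 2. hyp_image 2 \<theta> l = l}"
    "m \<in> {l \<in> pg_hyperplanes 2. hyp_image 2 \<theta> l = l}" "l \<noteq> m"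
  then have "l \<in> pg_hyperplanes n" "m \<in> pg_hyperplanes n" "hyp_image n \<theta> l = l" "hyp_image n \<theta> m = m"
    using assms(1) by auto
  then obtain x where "x \<in> pg_points n" "x \<subseteq> l" "x \<subseteq> m" "\<theta> x = x"
    using fixed_lines_meet_in_fixed_point[OF assms(1) _ _ _ _ lm(3)] by blast
  then show "\<exists>p\<in>{p \<in> pg_points 2. \<theta> p = p}. p \<subseteq> l \<and> p \<subseteq> m"
    using assms(1) by auto
qed auto

end

section \<open>Polar {2,2'}-kangaroos\<close>

locale polar_kangaroo = pg_collineation +
  assumes two_le_n: "2 \<le> n" and kangaroo: "polar_22_kangaroo n \<theta>"
begin

lemma hyp_image_hyperplane: "H \<in> pg_hyperplanes n \<Longrightarrow> hyp_image n \<theta> H \<in> pg_hyperplanes n"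
  using hyp_image_pg_hyperplane[OF two_le_n] .

lemma kangaroo_moved_incident:
  assumes "p \<in> pg_points n" "H \<in> pg_hyperplanes n" "p \<subseteq> H" "\<theta> p \<noteq> p" "hyp_image n \<theta> H \<noteq> H"
  shows "\<not> p \<subseteq> hyp_image n \<theta> H" "\<not> \<theta> p \<subseteq> H"
proof -
  have "\<not> pos_2_2' p H (\<theta> p) (hyp_image n \<theta> H)"
    using kangaroo assms(1-3) unfolding polar_22_kangaroo_def by blast
  then show "\<not> p \<subseteq> hyp_image n \<theta> H" "\<not> \<theta> p \<subseteq> H"
    using assms(4,5) unfolding pos_2_2'_def by auto
qed

lemma fixed_if_on_hyperplane_and_image:
  assumes "H \<in> pg_hyperplanes n" "hyp_image n \<theta> H \<noteq> H"
    and "x \<in> pg_points n" "x \<subseteq> H" "x \<subseteq> hyp_image n \<theta> H"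
  shows "\<theta> x = x"
  using kangaroo_moved_incident(1) assms by blast

lemma hyp_image_fixed_if_moved_pair:
  assumes "p \<in> pg_points n" "\<theta> p \<noteq> p" "H \<in> pg_hyperplanes n" "p \<subseteq> H" "\<theta> p \<subseteq> H"
  shows "hyp_image n \<theta> H = H"
  using kangaroo_moved_incident(2) assms by blast

lemma moved_line_invariant:
  assumes "q \<in> pg_points n" "\<theta> q \<noteq> q" "x \<in> pg_points n" "collinear_pts q (\<theta> q) x"
  shows "collinear_pts q (\<theta> q) (\<theta> x)"
proof (rule ccontr)
  assume "\<not> ?thesis"
  then obtain G where G: "G \<in> pg_hyperplanes n" "q \<subseteq> G" "\<theta> q \<subseteq> G" "\<not> \<theta> x \<subseteq> G"
    using hyperplane_through_line_avoiding[OF assms(1) image_pg_point[OF assms(1)] image_pg_point[OF assms(3)]]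
    by blast
  have "hyp_image n \<theta> G = G" using hyp_image_fixed_if_moved_pair[OF assms(1,2) G(1-3)] .
  moreover have "x \<subseteq> G"
    using hyperplane_contains_line[OF G(1) assms(1) image_pg_point[OF assms(1)] assms(3) G(2,3) assms(4)] .
  ultimately show False using image_subset_hyp_image[OF assms(3)] G(4) by blast
qed

lemma exists_nonfixed_hyperplane:
  assumes "p \<in> pg_points n" "\<theta> p \<noteq> p"
  shows "\<exists>K\<in>pg_hyperplanes n. hyp_image n \<theta> K \<noteq> K"
proof -
  obtain H where H: "H \<in> pg_hyperplanes n" "p \<subseteq> H" "\<not> \<theta> p \<subseteq> H"
    using hyperplane_separating_points[OF assms(1) image_pg_point[OF assms(1)] assms(2)[symmetric]] by blast
  then have "hyp_image n \<theta> H \<noteq> H" using image_subset_hyp_image[OF assms(1) H(2)] by auto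
  then show ?thesis using H(1) by blast
qed

text \<open>A point \<open>z\<close> of \<open>B\<close> moved by \<open>\<theta>\<close> lies on a moved hyperplane \<open>K'\<close> avoiding the centre; the
  fixed points \<open>K' \<inter> \<theta>(K')\<close> lie on \<open>B\<close>, so \<open>B\<close> is in the pencil of \<open>K'\<close> and \<open>\<theta>(K')\<close>, which
  puts \<open>z\<close> on \<open>\<theta>(K')\<close> and hence makes it fixed.\<close>
lemma axis_if_fixed_points_on_hyperplane:
  assumes "centre c" "B \<in> pg_hyperplanes n" "c \<subseteq> B"
    and fixed_on_B: "\<forall>a\<in>pg_points n. \<theta> a = a \<and> a \<noteq> c \<longrightarrow> a \<subseteq> B"
    and z: "z \<in> pg_points n" "z \<subseteq> B"
  shows "\<theta> z = z"
proof (rule ccontr)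
  assume moved: "\<theta> z \<noteq> z"
  have c: "c \<in> pg_points n" "\<theta> c = c" and line: "collinear_pts c z (\<theta> z)"
    using assms(1) z(1) moved unfolding centre_def by auto
  have "z \<noteq> c" using moved c(2) by blast
  then obtain K' where K': "K' \<in> pg_hyperplanes n" "z \<subseteq> K'" "\<not> c \<subseteq> K'"
    using hyperplane_separating_points[OF z(1) c(1)] by blast
  have "\<not> \<theta> z \<subseteq> K'"
  proof
    assume "\<theta> z \<subseteq> K'"
    have "collinear_pts z (\<theta> z) c" using collinear_rotate[OF c(1) z(1) image_pg_point[OF z(1)] line moved] .
    then show False
      using hyperplane_contains_line[OF K'(1) z(1) image_pg_point[OF z(1)] c(1) K'(2) \<open>\<theta> z \<subseteq> K'\<close>] K'(3) by blast
  qed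
  then have K'_moved: "hyp_image n \<theta> K' \<noteq> K'" using image_subset_hyp_image[OF z(1) K'(2)] by auto
  have "p \<subseteq> B" if "p \<in> pg_points n" "p \<subseteq> K'" "p \<subseteq> hyp_image n \<theta> K'" for p
  proof -
    have "\<theta> p = p" using fixed_if_on_hyperplane_and_image[OF K'(1) K'_moved that] .
    moreover have "p \<noteq> c" using that(2) K'(3) by blast
    ultimately show ?thesis using fixed_on_B that(1) by blast
  qed
  then have "K' \<inter> hyp_image n \<theta> K' \<subseteq> B"
    using pg_hyperplanes_inter_subsetI[OF K'(1) hyp_image_hyperplane[OF K'(1)] assms(2)] by blast
  moreover have "B \<noteq> K'" using assms(3) K'(3) by blast
  ultimately have "K' \<inter> B \<subseteq> hyp_image n \<theta> K'"
    using pencil_meet_subset[OF K'(1) hyp_image_hyperplane[OF K'(1)] assms(2) K'_moved[symmetric]] by blast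
  then have "z \<subseteq> hyp_image n \<theta> K'" using K'(2) z(2) by blast
  then show False using fixed_if_on_hyperplane_and_image[OF K'(1) K'_moved z(1) K'(2)] moved by simp
qed

lemma axis_if_fixed_point_off_hyperplane:
  assumes K: "K \<in> pg_hyperplanes n" "hyp_image n \<theta> K \<noteq> K"
    and c: "centre c" "\<not> c \<subseteq> K"
    and B: "B \<in> pg_hyperplanes n" "K \<inter> hyp_image n \<theta> K \<subseteq> B" "c \<subseteq> B"
    and a: "a \<in> pg_points n" "\<theta> a = a" "\<not> a \<subseteq> B"
  shows "\<exists>A\<in>pg_hyperplanes n. \<forall>z\<in>pg_points n. z \<subseteq> A \<longrightarrow> \<theta> z = z"
proof -
  have cP: "c \<in> pg_points n" using c(1) unfolding centre_def by blast
  have K': "hyp_image n \<theta> K \<in> pg_hyperplanes n" using hyp_image_hyperplane[OF K(1)] .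
  obtain A where A: "A \<in> pg_hyperplanes n" "K \<inter> hyp_image n \<theta> K \<subseteq> A" "a \<subseteq> A"
    using pencil_member_through[OF K(1) K' K(2)[symmetric] a(1)] by blast
  have "\<not> c \<subseteq> A"
  proof
    assume "c \<subseteq> A"
    then have "A = B" using pencil_member_unique[OF K(1) K' A(1) B(1) K(2)[symmetric] A(2) B(2) cP _ B(3) c(2)] by blast
    then show False using a(3) A(3) by simp
  qed
  have "\<not> a \<subseteq> K"
  proof
    assume "a \<subseteq> K"
    moreover from this have "a \<subseteq> hyp_image n \<theta> K" using image_subset_hyp_image[OF a(1)] a(2) by metis
    ultimately show False using B(2) a(3) by blast
  qed
  have K_A: "K \<inter> A \<subseteq> hyp_image n \<theta> K"
    using pencil_meet_subset[OF K(1) K' A(1) K(2)[symmetric] A(2)] A(3) \<open>\<not> a \<subseteq> K\<close> by blast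
  \<comment> \<open>Every point \<open>z \<noteq> a\<close> of \<open>A\<close> lies on the line joining \<open>a\<close> to a fixed point \<open>s\<close> of \<open>K \<inter> A\<close>.\<close>
  have "\<theta> z = z" if z: "z \<in> pg_points n" "z \<subseteq> A" for z
  proof (cases "z = a")
    case False
    obtain s where s: "s \<in> pg_points n" "collinear_pts a z s" "s \<subseteq> K"
      using line_meets_hyperplane[OF K(1) a(1) z(1)] False by metis
    have "s \<subseteq> A" using hyperplane_contains_line[OF A(1) a(1) z(1) s(1) A(3) z(2) s(2)] .
    then have "\<theta> s = s" using fixed_if_on_hyperplane_and_image[OF K s(1) s(3)] K_A s(3) by blast
    have "s \<noteq> a" using s(3) \<open>\<not> a \<subseteq> K\<close> by blast
    have "\<not> collinear_pts a s c"
      using hyperplane_contains_line[OF A(1) a(1) s(1) cP A(3) \<open>s \<subseteq> A\<close>] \<open>\<not> c \<subseteq> A\<close> by blast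
    moreover have "collinear_pts a s z" using collinear_swap23[OF a(1) z(1) s(1) s(2) \<open>s \<noteq> a\<close>] .
    ultimately show ?thesis
      using centre_fixes_line[OF c(1) a(1) s(1) a(2) \<open>\<theta> s = s\<close> \<open>s \<noteq> a\<close>[symmetric]] z(1) by blast
  qed (use a(2) in simp)
  then show ?thesis using A(1) by blast
qed

lemma axis_from_centre:
  assumes "K \<in> pg_hyperplanes n" "hyp_image n \<theta> K \<noteq> K" "centre c" "\<not> c \<subseteq> K"
  shows "\<exists>A\<in>pg_hyperplanes n. \<forall>p\<in>pg_points n. p \<subseteq> A \<longrightarrow> \<theta> p = p"
proof -
  have "c \<in> pg_points n" using assms(3) unfolding centre_def by blast
  then obtain B where B: "B \<in> pg_hyperplanes n" "K \<inter> hyp_image n \<theta> K \<subseteq> B" "c \<subseteq> B"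
    using pencil_member_through[OF assms(1) hyp_image_hyperplane[OF assms(1)] assms(2)[symmetric]] by blast
  show ?thesis
  proof (cases "\<forall>a\<in>pg_points n. \<theta> a = a \<and> a \<noteq> c \<longrightarrow> a \<subseteq> B")
    case True
    then show ?thesis using axis_if_fixed_points_on_hyperplane[OF assms(3) B(1,3) True] B(1) by blast
  next
    case False
    then obtain a where "a \<in> pg_points n" "\<theta> a = a" "\<not> a \<subseteq> B" by blast
    then show ?thesis using axis_if_fixed_point_off_hyperplane[OF assms B] by blast
  qed
qed

lemma every_line_has_fixed_point:
  assumes "n = 2" and c: "c1 \<in> pg_points n" "c2 \<in> pg_points n" "c3 \<in> pg_points n"
    "\<theta> c1 = c1" "\<theta> c2 = c2" "\<theta> c3 = c3" "c1 \<noteq> c2" "c1 \<noteq> c3" "\<not> collinear_pts c1 c2 c3"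
    and l: "l \<in> pg_hyperplanes n"
  shows "\<exists>p\<in>pg_points n. \<theta> p = p \<and> p \<subseteq> l"
proof (cases "hyp_image n \<theta> l = l")
  case False
  obtain x where x: "x \<in> pg_points n" "x \<subseteq> l" "x \<subseteq> hyp_image n \<theta> l"
    using hyperplanes_meet[OF two_le_n l hyp_image_hyperplane[OF l]] by blast
  then show ?thesis using fixed_if_on_hyperplane_and_image[OF l False x] by blast
next
  case True
  \<comment> \<open>A fixed line meets the fixed lines \<open>c1c2\<close> and \<open>c1c3\<close>, which are distinct, in fixed points.\<close>
  obtain m1 where m1: "m1 \<in> pg_hyperplanes n" "c1 \<subseteq> m1" "c2 \<subseteq> m1" "hyp_image n \<theta> m1 = m1"
    using fixed_points_on_fixed_line[OF assms(1) c(1,2,7,4,5)] by blast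
  obtain m2 where m2: "m2 \<in> pg_hyperplanes n" "c1 \<subseteq> m2" "c3 \<subseteq> m2" "hyp_image n \<theta> m2 = m2"
    using fixed_points_on_fixed_line[OF assms(1) c(1,3,8,4,6)] by blast
  have "l \<noteq> m1 \<or> l \<noteq> m2"
  proof (rule ccontr)
    assume "\<not> (l \<noteq> m1 \<or> l \<noteq> m2)"
    then have "collinear_pts c1 c2 c3"
      using plane_line_collinear[of l c1 c2 c3] l c m1 m2 assms(1) by simp
    then show False using c(9) by contradiction
  qed
  then obtain m where m: "m \<in> pg_hyperplanes n" "hyp_image n \<theta> m = m" "l \<noteq> m"
    using m1(1,4) m2(1,4) by blast
  show ?thesis using fixed_lines_meet_in_fixed_point[OF assms(1) l m(1) True m(2,3)] by blast
qed

lemma every_point_on_fixed_line: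
  assumes "n = 2" and c: "c1 \<in> pg_points n" "c2 \<in> pg_points n" "\<theta> c1 = c1" "\<theta> c2 = c2" "c1 \<noteq> c2"
    and p: "p \<in> pg_points n"
  shows "\<exists>l\<in>pg_hyperplanes n. hyp_image n \<theta> l = l \<and> p \<subseteq> l"
proof (cases "\<theta> p = p")
  case False
  obtain l where l: "l \<in> pg_hyperplanes n" "p \<subseteq> l" "\<theta> p \<subseteq> l"
    using hyperplane_through_two_points[OF two_le_n p image_pg_point[OF p]] by blast
  then show ?thesis using hyp_image_fixed_if_moved_pair[OF p False l] by blast
next
  case True
  show ?thesis
  proof (cases "p = c1")
    case True
    then show ?thesis using fixed_points_on_fixed_line[OF assms(1) c(1,2,5,3,4)] by blast
  next
    case False
    then show ?thesis using fixed_points_on_fixed_line[OF assms(1) p c(1) False \<open>\<theta> p = p\<close> c(3)] by blast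
  qed
qed

lemma baer_if_fixed_quadrangle:
  assumes "n = 2" "quadrangle a b c d" "\<forall>x\<in>{a, b, c, d}. x \<in> pg_points n \<and> \<theta> x = x"
  shows "baer_collineation \<theta>"
proof -
  have abc: "a \<in> pg_points n" "b \<in> pg_points n" "c \<in> pg_points n" "\<theta> a = a" "\<theta> b = b" "\<theta> c = c"
    "a \<noteq> b" "a \<noteq> c" "\<not> collinear_pts a b c"
    using assms(2,3) unfolding quadrangle_def by auto
  have "\<exists>p\<in>{p \<in> pg_points 2. \<theta> p = p}. p \<subseteq> l" if "l \<in> pg_hyperplanes 2" for l
    using every_line_has_fixed_point[OF assms(1) abc, of l] that assms(1) by auto
  moreover have "\<exists>l\<in>{l \<in> pg_hyperplanes 2. hyp_image 2 \<theta> l = l}. p \<subseteq> l" if "p \<in> pg_points 2" for p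
    using every_point_on_fixed_line[OF assms(1) abc(1,2,4,5,7), of p] that assms(1) by auto
  ultimately have "baer_subplane {p \<in> pg_points 2. \<theta> p = p} {l \<in> pg_hyperplanes 2. hyp_image 2 \<theta> l = l}"
    unfolding baer_subplane_def using fixed_subplane[OF assms] by blast
  then show ?thesis unfolding baer_collineation_def using collineation assms(1) by simp
qed

end

locale polar_kangaroo_moved_hyperplane = polar_kangaroo +
  fixes K
  assumes K: "K \<in> pg_hyperplanes n" "hyp_image n \<theta> K \<noteq> K"
begin

definition in_K_minus_image where
  "in_K_minus_image q \<longleftrightarrow> q \<in> pg_points n \<and> q \<subseteq> K \<and> \<not> q \<subseteq> hyp_image n \<theta> K"

lemma image_K: "hyp_image n \<theta> K \<in> pg_hyperplanes n"
  using hyp_image_hyperplane[OF K(1)] .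

lemma in_K_minus_imageD:
  assumes "in_K_minus_image q"
  shows "q \<in> pg_points n" "q \<subseteq> K" "\<not> q \<subseteq> hyp_image n \<theta> K"
  using assms unfolding in_K_minus_image_def by auto

lemma in_K_minus_image_moved:
  assumes "in_K_minus_image q"
  shows "\<theta> q \<noteq> q" "\<not> \<theta> q \<subseteq> K"
proof -
  note q = in_K_minus_imageD[OF assms]
  show "\<theta> q \<noteq> q" using image_subset_hyp_image[OF q(1,2)] q(3) by auto
  then show "\<not> \<theta> q \<subseteq> K" using kangaroo_moved_incident(2)[OF q(1) K(1) q(2)] K(2) by blast
qed

lemma moved_line_meets_K_once:
  assumes "in_K_minus_image q" "x \<in> pg_points n" "collinear_pts q (\<theta> q) x" "x \<subseteq> K"
  shows "x = q"
proof (rule ccontr)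
  assume "x \<noteq> q"
  note q = in_K_minus_imageD[OF assms(1)]
  have "collinear_pts q x (\<theta> q)" using collinear_swap23[OF q(1) image_pg_point[OF q(1)] assms(2,3) \<open>x \<noteq> q\<close>] .
  then have "\<theta> q \<subseteq> K" by (rule hyperplane_contains_line[OF K(1) q(1) assms(2) image_pg_point[OF q(1)] q(2) assms(4)])
  then show False using in_K_minus_image_moved(2)[OF assms(1)] by contradiction
qed

text \<open>The line \<open>qr\<close> meets \<open>\<theta>(K)\<close> in a fixed point \<open>s\<close>, so \<open>qr\<close> and \<open>\<theta>(q)\<theta>(r)\<close> meet in \<open>s\<close>;
  by Veblen--Young so do \<open>q \<theta>(q)\<close> and \<open>r \<theta>(r)\<close>.\<close>
lemma moved_lines_meet:
  assumes "in_K_minus_image q" "in_K_minus_image r" "q \<noteq> r"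
  shows "\<exists>c\<in>pg_points n. collinear_pts q (\<theta> q) c \<and> collinear_pts r (\<theta> r) c"
proof -
  note q = in_K_minus_imageD[OF assms(1)] and r = in_K_minus_imageD[OF assms(2)]
  obtain s where s: "s \<in> pg_points n" "collinear_pts q r s" "s \<subseteq> hyp_image n \<theta> K"
    using line_meets_hyperplane[OF image_K q(1) r(1) assms(3)] by blast
  have "s \<subseteq> K" using hyperplane_contains_line[OF K(1) q(1) r(1) s(1) q(2) r(2) s(2)] .
  then have "\<theta> s = s" using fixed_if_on_hyperplane_and_image[OF K s(1) _ s(3)] by blast
  then have "collinear_pts (\<theta> q) (\<theta> r) s" using collinear_image_iff[OF q(1) r(1) s(1)] s(2) by simp
  moreover have "s \<noteq> r" using s(3) r(3) by blast
  ultimately show ?thesis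
    using veblen_young[OF q(1) r(1) image_pg_point[OF q(1)] image_pg_point[OF r(1)] s(1)
        in_K_minus_image_moved(1)[OF assms(1), symmetric] _ s(2)] by blast
qed

lemma moved_lines_meet_unique:
  assumes "in_K_minus_image q" "in_K_minus_image r" "q \<noteq> r" "c \<in> pg_points n" "c' \<in> pg_points n"
    and "collinear_pts q (\<theta> q) c" "collinear_pts r (\<theta> r) c"
    and "collinear_pts q (\<theta> q) c'" "collinear_pts r (\<theta> r) c'"
  shows "c = c'"
proof (rule ccontr)
  assume "c \<noteq> c'"
  note q = in_K_minus_imageD[OF assms(1)] and r = in_K_minus_imageD[OF assms(2)]
  have "collinear_pts q (\<theta> q) r"
    using lines_with_two_common_points[OF q(1) image_pg_point[OF q(1)] r(1) image_pg_point[OF r(1)] assms(4,5)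
        in_K_minus_image_moved(1)[OF assms(1), symmetric] in_K_minus_image_moved(1)[OF assms(2), symmetric]
        \<open>c \<noteq> c'\<close> assms(6,8,7,9)] .
  then show False using moved_line_meets_K_once[OF assms(1) r(1) _ r(2)] assms(3) by blast
qed

lemma moved_lines_meet_fixed:
  assumes "in_K_minus_image q" "in_K_minus_image r" "q \<noteq> r" "c \<in> pg_points n"
    and "collinear_pts q (\<theta> q) c" "collinear_pts r (\<theta> r) c"
  shows "\<theta> c = c" "\<not> c \<subseteq> K"
proof -
  note q = in_K_minus_imageD[OF assms(1)] and r = in_K_minus_imageD[OF assms(2)]
  have "collinear_pts q (\<theta> q) (\<theta> c)"
    using moved_line_invariant[OF q(1) in_K_minus_image_moved(1)[OF assms(1)] assms(4,5)] .
  moreover have "collinear_pts r (\<theta> r) (\<theta> c)"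
    using moved_line_invariant[OF r(1) in_K_minus_image_moved(1)[OF assms(2)] assms(4,6)] .
  ultimately show "\<theta> c = c"
    using moved_lines_meet_unique[OF assms(1-3) image_pg_point[OF assms(4)] assms(4) _ _ assms(5,6)] by blast
  show "\<not> c \<subseteq> K"
    using moved_line_meets_K_once[OF assms(1) assms(4,5)] moved_line_meets_K_once[OF assms(2) assms(4,6)] assms(3)
    by auto
qed

definition meet_point where
  "meet_point q r = (SOME c. c \<in> pg_points n \<and> collinear_pts q (\<theta> q) c \<and> collinear_pts r (\<theta> r) c)"

lemma meet_point:
  assumes "in_K_minus_image q" "in_K_minus_image r" "q \<noteq> r"
  shows "meet_point q r \<in> pg_points n" "collinear_pts q (\<theta> q) (meet_point q r)"
    "collinear_pts r (\<theta> r) (meet_point q r)"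
proof -
  have "meet_point q r \<in> pg_points n \<and> collinear_pts q (\<theta> q) (meet_point q r) \<and>
      collinear_pts r (\<theta> r) (meet_point q r)"
    unfolding meet_point_def using moved_lines_meet[OF assms] by (rule someI_ex[OF bexE]) blast
  then show "meet_point q r \<in> pg_points n" "collinear_pts q (\<theta> q) (meet_point q r)"
    "collinear_pts r (\<theta> r) (meet_point q r)" by auto
qed

lemma meet_triangle:
  assumes "in_K_minus_image q" "in_K_minus_image r" "in_K_minus_image t" "q \<noteq> r" "q \<noteq> t" "r \<noteq> t"
    and c1: "c1 \<in> pg_points n" "collinear_pts q (\<theta> q) c1" "collinear_pts r (\<theta> r) c1"
    and c2: "c2 \<in> pg_points n" "collinear_pts q (\<theta> q) c2" "collinear_pts t (\<theta> t) c2"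
    and c3: "c3 \<in> pg_points n" "collinear_pts r (\<theta> r) c3" "collinear_pts t (\<theta> t) c3"
    and "c1 \<noteq> c2"
  shows "c1 \<noteq> c3" "c2 \<noteq> c3" "\<not> collinear_pts c1 c2 c3"
proof -
  show "c1 \<noteq> c3" "c2 \<noteq> c3"
    using moved_lines_meet_unique[OF assms(1,3,5) c1(1) c2(1) c1(2) _ c2(2,3)]
      moved_lines_meet_unique[OF assms(1,2,4) c1(1) c2(1) c1(2,3) c2(2)] c3 assms(16) by blast+
  show "\<not> collinear_pts c1 c2 c3"
  proof
    assume "collinear_pts c1 c2 c3"
    note q = in_K_minus_imageD(1)[OF assms(1)]
    have "collinear_pts q (\<theta> q) c3"
      using collinear_on_line_trans[OF q image_pg_point[OF q] c1(1) c2(1) c3(1)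
          in_K_minus_image_moved(1)[OF assms(1), symmetric] assms(16) c1(2) c2(2)] \<open>collinear_pts c1 c2 c3\<close>
      by blast
    then have "c1 = c3" using moved_lines_meet_unique[OF assms(1,2,4) c1(1) c3(1) c1(2,3) _ c3(2)] by blast
    with \<open>c1 \<noteq> c3\<close> show False by contradiction
  qed
qed

lemma collinear_if_meet_points_differ:
  assumes "in_K_minus_image q" "in_K_minus_image r" "in_K_minus_image t" "q \<noteq> r" "q \<noteq> t" "r \<noteq> t"
    and c1: "c1 \<in> pg_points n" "collinear_pts q (\<theta> q) c1" "collinear_pts r (\<theta> r) c1"
    and c2: "c2 \<in> pg_points n" "collinear_pts q (\<theta> q) c2" "collinear_pts t (\<theta> t) c2"
    and "c1 \<noteq> c2"
  shows "collinear_pts q r t"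
proof -
  note q = in_K_minus_imageD[OF assms(1)] and r = in_K_minus_imageD[OF assms(2)]
    and t = in_K_minus_imageD[OF assms(3)]
  obtain c3 where c3: "c3 \<in> pg_points n" "collinear_pts r (\<theta> r) c3" "collinear_pts t (\<theta> t) c3"
    using moved_lines_meet[OF assms(2,3,6)] by blast
  note distinct = meet_triangle[OF assms(1-6) c1 c2 c3 assms(13)]
  have "collinear_pts c1 c2 q"
    using collinear_exchange[OF q(1) image_pg_point[OF q(1)] c1(1) c2(1) q(1) c1(2) c2(2)
        collinear_refl1[OF q(1) image_pg_point[OF q(1)]] assms(13)] .
  moreover have "collinear_pts c1 c3 r"
    using collinear_exchange[OF r(1) image_pg_point[OF r(1)] c1(1) c3(1) r(1) c1(3) c3(2)
        collinear_refl1[OF r(1) image_pg_point[OF r(1)]] distinct(1)] .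
  moreover have "collinear_pts c2 c3 t"
    using collinear_exchange[OF t(1) image_pg_point[OF t(1)] c2(1) c3(1) t(1) c2(3) c3(3)
        collinear_refl1[OF t(1) image_pg_point[OF t(1)]] distinct(2)] .
  moreover have "\<not> c1 \<subseteq> K" using moved_lines_meet_fixed(2)[OF assms(1,2,4) c1] .
  ultimately show ?thesis
    using triangle_section_collinear[OF K(1) c1(1) c2(1) c3(1) q(1) r(1) t(1)] q(2) r(2) t(2) by blast
qed

lemma exists_in_K_minus_image: "\<exists>q. in_K_minus_image q"
proof (rule ccontr)
  assume "\<nexists>q. in_K_minus_image q"
  then have "\<forall>p\<in>pg_points n. p \<subseteq> K \<longrightarrow> p \<subseteq> hyp_image n \<theta> K"
    unfolding in_K_minus_image_def by blast
  then show False using hyperplane_eqI_points[OF K(1) image_K] K(2) by simp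
qed

lemma exists_in_K_minus_image_on_line:
  assumes "in_K_minus_image q" "t \<in> pg_points n" "t \<subseteq> K" "q \<noteq> t"
  shows "\<exists>t'. in_K_minus_image t' \<and> collinear_pts q t t' \<and> t' \<noteq> q"
proof (cases "t \<subseteq> hyp_image n \<theta> K")
  case True
  note q = in_K_minus_imageD[OF assms(1)]
  obtain t' where t': "t' \<in> pg_points n" "collinear_pts q t t'" "t' \<noteq> q" "t' \<noteq> t"
    using third_point_on_line[OF q(1) assms(2,4)] by blast
  have "t' \<subseteq> K" using hyperplane_contains_line[OF K(1) q(1) assms(2) t'(1) q(2) assms(3) t'(2)] .
  moreover have "\<not> t' \<subseteq> hyp_image n \<theta> K"
  proof
    assume "t' \<subseteq> hyp_image n \<theta> K"
    have "collinear_pts t t' q" using collinear_rotate[OF q(1) assms(2) t'(1) t'(2) t'(4)] .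
    then show False
      using hyperplane_contains_line[OF image_K assms(2) t'(1) q(1) True \<open>t' \<subseteq> hyp_image n \<theta> K\<close>] q(3) by blast
  qed
  ultimately show ?thesis using t' unfolding in_K_minus_image_def by blast
next
  case False
  then have "in_K_minus_image t" using assms(2,3) unfolding in_K_minus_image_def by blast
  moreover have "collinear_pts q t t" using collinear_refl2[OF in_K_minus_imageD(1)[OF assms(1)] assms(2)] .
  ultimately show ?thesis using assms(4) by blast
qed

lemma centre_if_on_all_moved_lines:
  assumes c: "c \<in> pg_points n" "\<theta> c = c" "\<not> c \<subseteq> K"
    and on_lines: "\<And>q. in_K_minus_image q \<Longrightarrow> collinear_pts q (\<theta> q) c"
  shows "centre c"
  unfolding centre_def
proof (intro conjI ballI impI)
  fix x assume x: "x \<in> pg_points n" "x \<noteq> c"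
  \<comment> \<open>Project \<open>x\<close> from \<open>c\<close> onto \<open>K\<close>.\<close>
  obtain q where q: "q \<in> pg_points n" "collinear_pts c x q" "q \<subseteq> K"
    using line_meets_hyperplane[OF K(1) c(1) x(1) x(2)[symmetric]] by blast
  have "q \<noteq> c" using q(3) c(3) by blast
  have cqx: "collinear_pts c q x" using collinear_swap23[OF c(1) x(1) q(1) q(2) \<open>q \<noteq> c\<close>] .
  show "collinear_pts c x (\<theta> x)"
  proof (cases "q \<subseteq> hyp_image n \<theta> K")
    case True
    then have "\<theta> q = q" using fixed_if_on_hyperplane_and_image[OF K q(1) q(3)] by blast
    then have "collinear_pts c q (\<theta> x)" using collinear_image_iff[OF c(1) q(1) x(1)] cqx c(2) by simp
    then show ?thesis
      using collinear_exchange[OF c(1) q(1) c(1) x(1) image_pg_point[OF x(1)] collinear_refl1[OF c(1) q(1)] cqx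
          _ x(2)[symmetric]] by blast
  next
    case False
    then have "in_K_minus_image q" using q unfolding in_K_minus_image_def by blast
    note moved = in_K_minus_image_moved(1)[OF this]
    have qqc: "collinear_pts q (\<theta> q) c" using on_lines[OF \<open>in_K_minus_image q\<close>] .
    have "collinear_pts q c (\<theta> q)" using collinear_swap23[OF q(1) image_pg_point[OF q(1)] c(1) qqc \<open>q \<noteq> c\<close>[symmetric]] .
    moreover have "collinear_pts q c x" using collinear_swap[OF c(1) q(1) x(1) cqx] .
    ultimately have qqx: "collinear_pts q (\<theta> q) x"
      using collinear_exchange[OF q(1) c(1) q(1) image_pg_point[OF q(1)] x(1) collinear_refl1[OF q(1) c(1)]]
        moved[symmetric] by blast
    then have "collinear_pts q (\<theta> q) (\<theta> x)" using moved_line_invariant[OF q(1) moved x(1)] by blast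
    then show ?thesis
      using collinear_exchange[OF q(1) image_pg_point[OF q(1)] c(1) x(1) image_pg_point[OF x(1)] qqc qqx
          _ x(2)[symmetric]] by blast
  qed
qed (use c in auto)

lemma centre_if_concurrent:
  assumes "in_K_minus_image q0"
    and concurrent: "\<forall>r1 r2. in_K_minus_image r1 \<and> r1 \<noteq> q0 \<and> in_K_minus_image r2 \<and> r2 \<noteq> q0 \<longrightarrow>
      meet_point q0 r1 = meet_point q0 r2"
  shows "\<exists>c. centre c \<and> \<not> c \<subseteq> K"
proof -
  obtain t where t: "t \<in> pg_points n" "t \<subseteq> K" "t \<subseteq> hyp_image n \<theta> K"
    using hyperplanes_meet[OF two_le_n K(1) image_K] by blast
  then have "q0 \<noteq> t" using in_K_minus_imageD(3)[OF assms(1)] by blast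
  then obtain r0 where r0: "in_K_minus_image r0" "r0 \<noteq> q0"
    using exists_in_K_minus_image_on_line[OF assms(1) t(1,2)] by blast
  define c where "c = meet_point q0 r0"
  note c = meet_point[OF assms(1) r0(1) r0(2)[symmetric], folded c_def]
  have "collinear_pts q (\<theta> q) c" if "in_K_minus_image q" for q
  proof (cases "q = q0")
    case False
    then have "meet_point q0 q = c" using concurrent that r0 unfolding c_def by blast
    then show ?thesis using meet_point(3)[OF assms(1) that False[symmetric]] by simp
  qed (use c(2) in simp)
  moreover note moved_lines_meet_fixed[OF assms(1) r0(1) r0(2)[symmetric] c]
  ultimately show ?thesis using centre_if_on_all_moved_lines c(1) by blast
qed

lemma exists_in_K_minus_image_off_line:
  assumes "3 \<le> n" "in_K_minus_image q" "r \<in> pg_points n" "r \<noteq> q"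
  shows "\<exists>t. in_K_minus_image t \<and> \<not> collinear_pts q r t"
proof -
  note q = in_K_minus_imageD(1)[OF assms(2)]
  obtain t0 where t0: "t0 \<in> pg_points n" "t0 \<subseteq> K" "\<not> collinear_pts q r t0"
    using exists_point_off_line_in_hyperplane[OF assms(1) K(1) q assms(3)] by blast
  then have "q \<noteq> t0" using collinear_refl1[OF q assms(3)] by blast
  then obtain t where t: "in_K_minus_image t" "collinear_pts q t0 t" "t \<noteq> q"
    using exists_in_K_minus_image_on_line[OF assms(2) t0(1,2)] by blast
  note tP = in_K_minus_imageD(1)[OF t(1)]
  have "\<not> collinear_pts q r t"
  proof
    assume "collinear_pts q r t"
    have "collinear_pts q t t0" using collinear_swap23[OF q t0(1) tP t(2,3)] .
    then show False
      using collinear_on_line_trans[OF q assms(3) q tP t0(1) assms(4)[symmetric] t(3)[symmetric]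
          collinear_refl1[OF q assms(3)] \<open>collinear_pts q r t\<close>] t0(3) by blast
  qed
  then show ?thesis using t(1) by blast
qed

lemma plane_if_not_concurrent:
  assumes q0: "in_K_minus_image q0"
    and r1: "in_K_minus_image r1" "r1 \<noteq> q0" and r2: "in_K_minus_image r2" "r2 \<noteq> q0"
    and "meet_point q0 r1 \<noteq> meet_point q0 r2"
  shows "n = 2"
proof (rule ccontr)
  assume "n \<noteq> 2"
  then have "3 \<le> n" using two_le_n by simp
  note q = in_K_minus_imageD(1)[OF q0] and r1P = in_K_minus_imageD(1)[OF r1(1)]
    and r2P = in_K_minus_imageD(1)[OF r2(1)]
  have collinear: "collinear_pts q0 r t"
    if "in_K_minus_image r" "r \<noteq> q0" "in_K_minus_image t" "t \<noteq> q0" "meet_point q0 r \<noteq> meet_point q0 t" for r t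
    using collinear_if_meet_points_differ[OF q0 that(1,3) that(2)[symmetric] that(4)[symmetric] _
        meet_point[OF q0 that(1) that(2)[symmetric]] meet_point[OF q0 that(3) that(4)[symmetric]] that(5)]
      that(5) by blast
  obtain t where t: "in_K_minus_image t" "\<not> collinear_pts q0 r1 t"
    using exists_in_K_minus_image_off_line[OF \<open>3 \<le> n\<close> q0 r1P r1(2)] by blast
  have "t \<noteq> q0" using t(2) collinear_refl1[OF q r1P] by blast
  have "\<not> collinear_pts q0 r2 t"
    using collinear_on_line_trans[OF q r1P q r2P in_K_minus_imageD(1)[OF t(1)] r1(2)[symmetric]
        r2(2)[symmetric] collinear_refl1[OF q r1P] collinear[OF r1 r2 assms(6)]] t(2) by blast
  then have "meet_point q0 r1 = meet_point q0 t" "meet_point q0 r2 = meet_point q0 t"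
    using collinear[OF r1 t(1) \<open>t \<noteq> q0\<close>] collinear[OF r2 t(1) \<open>t \<noteq> q0\<close>] t(2) by blast+
  then show False using assms(6) by simp
qed

lemma not_collinear_with_fixed_point_of_K:
  assumes "in_K_minus_image q" "c \<in> pg_points n" "c' \<in> pg_points n" "c \<noteq> c'"
    and "collinear_pts q (\<theta> q) c" "collinear_pts q (\<theta> q) c'"
    and "s \<in> pg_points n" "s \<subseteq> K" "s \<subseteq> hyp_image n \<theta> K"
  shows "\<not> collinear_pts c c' s"
proof
  assume "collinear_pts c c' s"
  note q = in_K_minus_imageD[OF assms(1)]
  have "collinear_pts q (\<theta> q) s"
    using collinear_on_line_trans[OF q(1) image_pg_point[OF q(1)] assms(2,3,7)
        in_K_minus_image_moved(1)[OF assms(1), symmetric] assms(4,5,6) \<open>collinear_pts c c' s\<close>] .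
  then have "s = q" using moved_line_meets_K_once[OF assms(1,7) _ assms(8)] by blast
  then show False using q(3) assms(9) by simp
qed

text \<open>The three meet points of the lines \<open>q \<theta>(q)\<close> together with a point of \<open>K \<inter> \<theta>(K)\<close> form a
  quadrangle of fixed points.\<close>
lemma fixed_quadrangle_if_not_concurrent:
  assumes q0: "in_K_minus_image q0"
    and r1: "in_K_minus_image r1" "r1 \<noteq> q0" and r2: "in_K_minus_image r2" "r2 \<noteq> q0"
    and "meet_point q0 r1 \<noteq> meet_point q0 r2"
  shows "\<exists>a b c d. quadrangle a b c d \<and> (\<forall>x\<in>{a, b, c, d}. x \<in> pg_points n \<and> \<theta> x = x)"
proof -
  have "r1 \<noteq> r2" using assms(6) by auto
  define c1 where "c1 = meet_point q0 r1"
  define c2 where "c2 = meet_point q0 r2"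
  note c1 = meet_point[OF q0 r1(1) r1(2)[symmetric], folded c1_def]
  note c2 = meet_point[OF q0 r2(1) r2(2)[symmetric], folded c2_def]
  obtain c3 where c3: "c3 \<in> pg_points n" "collinear_pts r1 (\<theta> r1) c3" "collinear_pts r2 (\<theta> r2) c3"
    using moved_lines_meet[OF r1(1) r2(1) \<open>r1 \<noteq> r2\<close>] by blast
  have "c1 \<noteq> c2" using assms(6) c1_def c2_def by simp
  note triangle = meet_triangle[OF q0 r1(1) r2(1) r1(2)[symmetric] r2(2)[symmetric] \<open>r1 \<noteq> r2\<close>
      c1 c2 c3 \<open>c1 \<noteq> c2\<close>]
  note fixed1 = moved_lines_meet_fixed[OF q0 r1(1) r1(2)[symmetric] c1]
  note fixed2 = moved_lines_meet_fixed[OF q0 r2(1) r2(2)[symmetric] c2]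
  note fixed3 = moved_lines_meet_fixed[OF r1(1) r2(1) \<open>r1 \<noteq> r2\<close> c3]
  obtain s where s: "s \<in> pg_points n" "s \<subseteq> K" "s \<subseteq> hyp_image n \<theta> K"
    using hyperplanes_meet[OF two_le_n K(1) image_K] by blast
  then have "\<theta> s = s" using fixed_if_on_hyperplane_and_image[OF K] by blast
  have "s \<noteq> c1" "s \<noteq> c2" "s \<noteq> c3" using s(2) fixed1(2) fixed2(2) fixed3(2) by auto
  have "\<not> collinear_pts c1 c2 c3" by (rule triangle(3))
  moreover have "\<not> collinear_pts c1 c2 s"
    using not_collinear_with_fixed_point_of_K[OF q0 c1(1) c2(1) \<open>c1 \<noteq> c2\<close> c1(2) c2(2) s] .
  moreover have "\<not> collinear_pts c1 c3 s"
    using not_collinear_with_fixed_point_of_K[OF r1(1) c1(1) c3(1) triangle(1) c1(3) c3(2) s] .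
  moreover have "\<not> collinear_pts c2 c3 s"
    using not_collinear_with_fixed_point_of_K[OF r2(1) c2(1) c3(1) triangle(2) c2(3) c3(3) s] .
  moreover have "distinct [c1, c2, c3, s]" using \<open>c1 \<noteq> c2\<close> triangle(1,2) \<open>s \<noteq> c1\<close> \<open>s \<noteq> c2\<close> \<open>s \<noteq> c3\<close> by auto
  ultimately have "quadrangle c1 c2 c3 s" using quadrangleI[OF c1(1) c2(1) c3(1) s(1)] by blast
  then show ?thesis using c1(1) c2(1) c3(1) s(1) fixed1(1) fixed2(1) fixed3(1) \<open>\<theta> s = s\<close> by blast
qed

end

theorem proposition4p2:
  fixes \<theta> :: "(nat \<Rightarrow> 'k::division_ring) set \<Rightarrow> (nat \<Rightarrow> 'k) set"
    and n :: nat
  assumes "n \<ge> 2"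
    and "collineation n \<theta>"
    and "\<exists>p\<in>pg_points n. \<theta> p \<noteq> p"
    and "polar_22_kangaroo n \<theta>"
  shows "central_collineation n \<theta> \<or> (n = 2 \<and> baer_collineation \<theta>)"
proof -
  interpret polar_kangaroo n \<theta> using assms(1,2,4) by unfold_locales
  obtain K where "K \<in> pg_hyperplanes n" "hyp_image n \<theta> K \<noteq> K"
    using exists_nonfixed_hyperplane assms(3) by blast
  then interpret polar_kangaroo_moved_hyperplane n \<theta> K by unfold_locales
  obtain q0 where q0: "in_K_minus_image q0" using exists_in_K_minus_image by blast
  show ?thesis
  proof (cases "\<forall>r1 r2. in_K_minus_image r1 \<and> r1 \<noteq> q0 \<and> in_K_minus_image r2 \<and> r2 \<noteq> q0 \<longrightarrow>
      meet_point q0 r1 = meet_point q0 r2")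
    case True
    then obtain c where "centre c" "\<not> c \<subseteq> K" using centre_if_concurrent[OF q0] by blast
    then have "central_collineation n \<theta>"
      using axis_from_centre[OF K] collineation unfolding central_collineation_def by blast
    then show ?thesis ..
  next
    case False
    then obtain r1 r2 where r: "in_K_minus_image r1" "r1 \<noteq> q0" "in_K_minus_image r2" "r2 \<noteq> q0"
      "meet_point q0 r1 \<noteq> meet_point q0 r2" by blast
    have "n = 2" using plane_if_not_concurrent[OF q0 r] .
    moreover obtain a b c d where "quadrangle a b c d" "\<forall>x\<in>{a, b, c, d}. x \<in> pg_points n \<and> \<theta> x = x"
      using fixed_quadrangle_if_not_concurrent[OF q0 r] by blast
    ultimately show ?thesis using baer_if_fixed_quadrangle by blast
  qed
qed

end
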